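(* Every eaco $(\mathcal{C},P)$ is a restricted $\Sigma(\mathcal{C}_P^o)$-doctrine.
   Context: A doctrine is a pair $(\mathcal{C},P)$, $\mathcal{C}$ a category with finite products, $P:\mathcal{C}^{op}\to\mathbf{Pos}$ a functor, $f^*=P(f)$; primary: each $P(A)$ has binary meets preserved by each $f^*$. Elementary: primary and for every $A$ there is $\delta_A\in P(A\times A)$ such that for every $X$ the assignment $\psi\mapsto\langle\pi_1,\pi_2\rangle^*\psi\wedge\langle\pi_2,\pi_3\rangle^*\delta_A$ ($\pi_i$ the projections of $X\times A\times A$) is a left adjoint $P(X\times A)\to P(X\times A\times A)$ to $(id_X\times\Delta_A)^*$. Graph of $f:X\to A$: $\mathcal{G}(f)=(f\times id_A)^*\delta_A\in P(X\times A)$. Stable initial object: initial $0$ with $X\times0\cong0$ for all $X$. AC: for every $A$ not a stable initial object and every $\Gamma$, $\pi_\Gamma^*$ ($\pi_\Gamma:\Gamma\times A\to\Gamma$) has a left adjoint $\Sigma_{\pi_\Gamma}$ and for every $\psi\in P(\Gamma\times A)$ there is a chosen $\epsilon_\psi:\Gamma\to A$ with $\Sigma_{\pi_\Gamma}\psi=\langle id_\Gamma,\epsilon_\psi\rangle^*\psi$ (also used with factors swapped). Co-comprehension: every $P(A)$ has a bottom and for each $\alpha$ there is $\lceil\alpha\rceil:\{\alpha\}^o\to A$ with $\lceil\alpha\rceil^*\alpha=\bot$, universal (unique factorization) among $f$ with $f^*\alpha=\bot$; full if $\lceil\beta\rceil$ factoring through $\lceil\alpha\rceil$ implies $\alpha\le\beta$.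 $\mathcal{C}_P^o$ is the pullback-stable class of arrows of the form $\lceil\alpha\rceil$ (the pullback of $\lceil\alpha\rceil$ along $f$ is $\lceil f^*\alpha\rceil$). An eaco is an elementary doctrine with full co-comprehension satisfying AC such that for every $f:X\to A$ and $\alpha\in P(A)$: $f^*\langle\epsilon_{\mathcal{G}(\lceil\alpha\rceil)},id_A\rangle^*\mathcal{G}(\lceil\alpha\rceil)=\langle\epsilon_{\mathcal{G}(\lceil f^*\alpha\rceil)},id_X\rangle^*\mathcal{G}(\lceil f^*\alpha\rceil)$ (with $\epsilon_{\mathcal{G}(\lceil\alpha\rceil)}:A\to\{\alpha\}^o$ the AC witness for the projection $\{\alpha\}^o\times A\to A$). A restricted $\Sigma(\mathcal{A})$-doctrine (for a pullback-stable class $\mathcal{A}$): for every $f:A\to B$ in $\mathcal{A}$, $f^*$ has a left adjoint $\Sigma_f$ and for every pullback square $h\circ g=f\circ k$ and $\xi\in P(B)$, $h^*\Sigma_ff^*\xi=\Sigma_gk^*f^*\xi$. *)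

theory Defs
  imports Main
begin

text \<open>A category with chosen finite products (terminal object, binary products
with chosen projections and pairing).  Objects have type 'o, arrows type 'm.
Composition: Cmp C g f is g after f.\<close>

record ('o,'m) cat =
  Ob   :: "'o set"
  Ar   :: "'m set"
  Dm   :: "'m \<Rightarrow> 'o"
  Cd   :: "'m \<Rightarrow> 'o"
  Cmp  :: "'m \<Rightarrow> 'm \<Rightarrow> 'm"
  Idt  :: "'o \<Rightarrow> 'm"
  Prd  :: "'o \<Rightarrow> 'o \<Rightarrow> 'o"
  Pr1  :: "'o \<Rightarrow> 'o \<Rightarrow> 'm"
  Pr2  :: "'o \<Rightarrow> 'o \<Rightarrow> 'm"
  Pair :: "'m \<Rightarrow> 'm \<Rightarrow> 'm"
  Trm  :: "'o"

definition hom :: "('o,'m) cat \<Rightarrow> 'o \<Rightarrow> 'o \<Rightarrow> 'm set" where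
  "hom C A B = {f \<in> Ar C. Dm C f = A \<and> Cd C f = B}"

definition category :: "('o,'m) cat \<Rightarrow> bool" where
  "category C \<longleftrightarrow>
     (\<forall>f\<in>Ar C. Dm C f \<in> Ob C \<and> Cd C f \<in> Ob C) \<and>
     (\<forall>A\<in>Ob C. Idt C A \<in> hom C A A) \<and>
     (\<forall>A B E f g. f \<in> hom C A B \<longrightarrow> g \<in> hom C B E \<longrightarrow> Cmp C g f \<in> hom C A E) \<and>
     (\<forall>A B E F f g h. f \<in> hom C A B \<longrightarrow> g \<in> hom C B E \<longrightarrow> h \<in> hom C E F \<longrightarrow>
        Cmp C h (Cmp C g f) = Cmp C (Cmp C h g) f) \<and>
     (\<forall>A B f. f \<in> hom C A B \<longrightarrow> Cmp C (Idt C B) f = f \<and> Cmp C f (Idt C A) = f)"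

definition finite_products :: "('o,'m) cat \<Rightarrow> bool" where
  "finite_products C \<longleftrightarrow> category C \<and>
     Trm C \<in> Ob C \<and> (\<forall>A\<in>Ob C. \<exists>!t. t \<in> hom C A (Trm C)) \<and>
     (\<forall>A\<in>Ob C. \<forall>B\<in>Ob C.
        Prd C A B \<in> Ob C \<and> Pr1 C A B \<in> hom C (Prd C A B) A \<and> Pr2 C A B \<in> hom C (Prd C A B) B \<and>
        (\<forall>Z f g. f \<in> hom C Z A \<longrightarrow> g \<in> hom C Z B \<longrightarrow>
            Pair C f g \<in> hom C Z (Prd C A B) \<and>
            Cmp C (Pr1 C A B) (Pair C f g) = f \<and> Cmp C (Pr2 C A B) (Pair C f g) = g) \<and>
        (\<forall>Z h. h \<in> hom C Z (Prd C A B) \<longrightarrow>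
            h = Pair C (Cmp C (Pr1 C A B) h) (Cmp C (Pr2 C A B) h)))"

text \<open>A functor P : C^op \<rightarrow> Pos: P(A) = Pd D A ordered by Le D A, reindexing f^* = Re D f.\<close>

record ('o,'m,'p) doct =
  Pd :: "'o \<Rightarrow> 'p set"
  Le :: "'o \<Rightarrow> 'p \<Rightarrow> 'p \<Rightarrow> bool"
  Re :: "'m \<Rightarrow> 'p \<Rightarrow> 'p"

definition doctrine :: "('o,'m) cat \<Rightarrow> ('o,'m,'p) doct \<Rightarrow> bool" where
  "doctrine C D \<longleftrightarrow> finite_products C \<and>
     (\<forall>A\<in>Ob C. (\<forall>a\<in>Pd D A. Le D A a a) \<and>
        (\<forall>a\<in>Pd D A. \<forall>b\<in>Pd D A. Le D A a b \<longrightarrow> Le D A b a \<longrightarrow> a = b) \<and>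
        (\<forall>a\<in>Pd D A. \<forall>b\<in>Pd D A. \<forall>c\<in>Pd D A. Le D A a b \<longrightarrow> Le D A b c \<longrightarrow> Le D A a c)) \<and>
     (\<forall>A B f. f \<in> hom C A B \<longrightarrow>
        (\<forall>b\<in>Pd D B. Re D f b \<in> Pd D A) \<and>
        (\<forall>b\<in>Pd D B. \<forall>c\<in>Pd D B. Le D B b c \<longrightarrow> Le D A (Re D f b) (Re D f c))) \<and>
     (\<forall>A\<in>Ob C. \<forall>a\<in>Pd D A. Re D (Idt C A) a = a) \<and>
     (\<forall>A B E f g. f \<in> hom C A B \<longrightarrow> g \<in> hom C B E \<longrightarrow>
        (\<forall>c\<in>Pd D E. Re D (Cmp C g f) c = Re D f (Re D g c)))"

definition primary :: "('o,'m) cat \<Rightarrow> ('o,'m,'p) doct \<Rightarrow> ('o \<Rightarrow> 'p \<Rightarrow> 'p \<Rightarrow> 'p) \<Rightarrow> bool" where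
  "primary C D Meet \<longleftrightarrow> doctrine C D \<and>
     (\<forall>A\<in>Ob C. \<forall>a\<in>Pd D A. \<forall>b\<in>Pd D A.
        Meet A a b \<in> Pd D A \<and> Le D A (Meet A a b) a \<and> Le D A (Meet A a b) b \<and>
        (\<forall>c\<in>Pd D A. Le D A c a \<longrightarrow> Le D A c b \<longrightarrow> Le D A c (Meet A a b))) \<and>
     (\<forall>A B f. f \<in> hom C A B \<longrightarrow>
        (\<forall>a\<in>Pd D B. \<forall>b\<in>Pd D B. Re D f (Meet B a b) = Meet A (Re D f a) (Re D f b)))"

text \<open>X \<times> A \<times> A is read as (X \<times> A) \<times> A with projections \<pi>1, \<pi>2, \<pi>3.\<close>

definition elementary :: "('o,'m) cat \<Rightarrow> ('o,'m,'p) doct \<Rightarrow> ('o \<Rightarrow> 'p \<Rightarrow> 'p \<Rightarrow> 'p)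
    \<Rightarrow> ('o \<Rightarrow> 'p) \<Rightarrow> bool" where
  "elementary C D Meet Delta \<longleftrightarrow> primary C D Meet \<and>
     (\<forall>A\<in>Ob C. Delta A \<in> Pd D (Prd C A A) \<and>
       (\<forall>X\<in>Ob C.
         (let XA = Prd C X A; T = Prd C XA A;
              p1 = Cmp C (Pr1 C X A) (Pr1 C XA A);
              p2 = Cmp C (Pr2 C X A) (Pr1 C XA A);
              p3 = Pr2 C XA A;
              idD = Pair C (Idt C XA) (Pr2 C X A)
          in \<forall>\<psi>\<in>Pd D XA. \<forall>\<phi>\<in>Pd D T.
               Le D T (Meet T (Re D (Pair C p1 p2) \<psi>) (Re D (Pair C p2 p3) (Delta A))) \<phi>
               \<longleftrightarrow> Le D XA \<psi> (Re D idD \<phi>))))"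

definition graph :: "('o,'m) cat \<Rightarrow> ('o,'m,'p) doct \<Rightarrow> ('o \<Rightarrow> 'p) \<Rightarrow> 'm \<Rightarrow> 'p" where
  "graph C D Delta f =
     (let X = Dm C f; A = Cd C f
      in Re D (Pair C (Cmp C f (Pr1 C X A)) (Pr2 C X A)) (Delta A))"

definition iso :: "('o,'m) cat \<Rightarrow> 'm \<Rightarrow> bool" where
  "iso C f \<longleftrightarrow> f \<in> Ar C \<and> (\<exists>g. g \<in> hom C (Cd C f) (Dm C f) \<and>
      Cmp C g f = Idt C (Dm C f) \<and> Cmp C f g = Idt C (Cd C f))"

definition initial :: "('o,'m) cat \<Rightarrow> 'o \<Rightarrow> bool" where
  "initial C Z \<longleftrightarrow> Z \<in> Ob C \<and> (\<forall>A\<in>Ob C. \<exists>!f. f \<in> hom C Z A)"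

definition stable_initial :: "('o,'m) cat \<Rightarrow> 'o \<Rightarrow> bool" where
  "stable_initial C Z \<longleftrightarrow> initial C Z \<and> (\<forall>X\<in>Ob C. \<exists>f\<in>hom C (Prd C X Z) Z. iso C f)"

text \<open>AC with chosen witnesses: EpsC \<Gamma> A \<psi> for the projection \<Gamma>\<times>A \<rightarrow> \<Gamma>,
  EpsW \<Gamma> A \<psi> for the projection A\<times>\<Gamma> \<rightarrow> \<Gamma> (factors swapped).  The condition says that
  \<psi> \<mapsto> <id,\<epsilon>_\<psi>>^* \<psi> is a left adjoint of the projection's reindexing.\<close>

definition AC :: "('o,'m) cat \<Rightarrow> ('o,'m,'p) doct \<Rightarrow> ('o \<Rightarrow> 'o \<Rightarrow> 'p \<Rightarrow> 'm)
    \<Rightarrow> ('o \<Rightarrow> 'o \<Rightarrow> 'p \<Rightarrow> 'm) \<Rightarrow> bool" where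
  "AC C D EpsC EpsW \<longleftrightarrow>
     (\<forall>A\<in>Ob C. \<not> stable_initial C A \<longrightarrow> (\<forall>G\<in>Ob C.
        (\<forall>\<psi>\<in>Pd D (Prd C G A). EpsC G A \<psi> \<in> hom C G A \<and>
           (\<forall>\<xi>\<in>Pd D G. Le D G (Re D (Pair C (Idt C G) (EpsC G A \<psi>)) \<psi>) \<xi>
                         \<longleftrightarrow> Le D (Prd C G A) \<psi> (Re D (Pr1 C G A) \<xi>))) \<and>
        (\<forall>\<psi>\<in>Pd D (Prd C A G). EpsW G A \<psi> \<in> hom C G A \<and>
           (\<forall>\<xi>\<in>Pd D G. Le D G (Re D (Pair C (EpsW G A \<psi>) (Idt C G)) \<psi>) \<xi>
                         \<longleftrightarrow> Le D (Prd C A G) \<psi> (Re D (Pr2 C A G) \<xi>)))))"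

text \<open>Co-comprehension: CoObj A \<alpha> = {\<alpha>}^o, CoArr A \<alpha> = \<lceil>\<alpha>\<rceil>.\<close>

definition cocomprehension :: "('o,'m) cat \<Rightarrow> ('o,'m,'p) doct \<Rightarrow> ('o \<Rightarrow> 'p)
    \<Rightarrow> ('o \<Rightarrow> 'p \<Rightarrow> 'o) \<Rightarrow> ('o \<Rightarrow> 'p \<Rightarrow> 'm) \<Rightarrow> bool" where
  "cocomprehension C D Bot CoObj CoArr \<longleftrightarrow>
     (\<forall>A\<in>Ob C. Bot A \<in> Pd D A \<and> (\<forall>a\<in>Pd D A. Le D A (Bot A) a)) \<and>
     (\<forall>A\<in>Ob C. \<forall>a\<in>Pd D A.
        CoObj A a \<in> Ob C \<and> CoArr A a \<in> hom C (CoObj A a) A \<and>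
        Re D (CoArr A a) a = Bot (CoObj A a) \<and>
        (\<forall>Y f. f \<in> hom C Y A \<longrightarrow> Re D f a = Bot Y \<longrightarrow>
           (\<exists>!g. g \<in> hom C Y (CoObj A a) \<and> Cmp C (CoArr A a) g = f)))"

definition full_cocomprehension :: "('o,'m) cat \<Rightarrow> ('o,'m,'p) doct \<Rightarrow> ('o \<Rightarrow> 'p)
    \<Rightarrow> ('o \<Rightarrow> 'p \<Rightarrow> 'o) \<Rightarrow> ('o \<Rightarrow> 'p \<Rightarrow> 'm) \<Rightarrow> bool" where
  "full_cocomprehension C D Bot CoObj CoArr \<longleftrightarrow> cocomprehension C D Bot CoObj CoArr \<and>
     (\<forall>A\<in>Ob C. \<forall>a\<in>Pd D A. \<forall>b\<in>Pd D A.
        (\<exists>g. g \<in> hom C (CoObj A b) (CoObj A a) \<and> Cmp C (CoArr A a) g = CoArr A b)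
        \<longrightarrow> Le D A a b)"

definition eaco :: "('o,'m) cat \<Rightarrow> ('o,'m,'p) doct \<Rightarrow> ('o \<Rightarrow> 'p \<Rightarrow> 'p \<Rightarrow> 'p) \<Rightarrow> ('o \<Rightarrow> 'p)
    \<Rightarrow> ('o \<Rightarrow> 'o \<Rightarrow> 'p \<Rightarrow> 'm) \<Rightarrow> ('o \<Rightarrow> 'o \<Rightarrow> 'p \<Rightarrow> 'm)
    \<Rightarrow> ('o \<Rightarrow> 'p) \<Rightarrow> ('o \<Rightarrow> 'p \<Rightarrow> 'o) \<Rightarrow> ('o \<Rightarrow> 'p \<Rightarrow> 'm) \<Rightarrow> bool" where
  "eaco C D Meet Delta EpsC EpsW Bot CoObj CoArr \<longleftrightarrow>
     elementary C D Meet Delta \<and> full_cocomprehension C D Bot CoObj CoArr \<and>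
     AC C D EpsC EpsW \<and>
     (\<forall>X A f a. f \<in> hom C X A \<longrightarrow> a \<in> Pd D A \<longrightarrow>
        \<not> stable_initial C (CoObj A a) \<longrightarrow> \<not> stable_initial C (CoObj X (Re D f a)) \<longrightarrow>
        (let G = graph C D Delta (CoArr A a);
             b = Re D f a;
             G' = graph C D Delta (CoArr X b)
         in Re D f (Re D (Pair C (EpsW A (CoObj A a) G) (Idt C A)) G)
            = Re D (Pair C (EpsW X (CoObj X b) G') (Idt C X)) G'))"

definition coco_class :: "('o,'m) cat \<Rightarrow> ('o,'m,'p) doct \<Rightarrow> ('o \<Rightarrow> 'p \<Rightarrow> 'm) \<Rightarrow> 'm set" where
  "coco_class C D CoArr = {h. \<exists>A\<in>Ob C. \<exists>a\<in>Pd D A. h = CoArr A a}"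

definition pullback :: "('o,'m) cat \<Rightarrow> 'm \<Rightarrow> 'm \<Rightarrow> 'm \<Rightarrow> 'm \<Rightarrow> bool" where
  "pullback C h g f k \<longleftrightarrow>
     (\<exists>A B E F. f \<in> hom C A B \<and> h \<in> hom C E B \<and> g \<in> hom C F E \<and> k \<in> hom C F A \<and>
        Cmp C h g = Cmp C f k \<and>
        (\<forall>Z u v. u \<in> hom C Z E \<longrightarrow> v \<in> hom C Z A \<longrightarrow> Cmp C h u = Cmp C f v \<longrightarrow>
           (\<exists>!w. w \<in> hom C Z F \<and> Cmp C g w = u \<and> Cmp C k w = v)))"

text \<open>Restricted Sigma(\<A>)-doctrine.  The equation h^* \<Sigma>_f f^* \<xi> = \<Sigma>_g k^* f^* \<xi> is stated as:
  h^* \<Sigma>_f f^* \<xi> is the value at k^* f^* \<xi> of a left adjoint of g^*.\<close>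

definition restricted_Sigma_doctrine :: "('o,'m) cat \<Rightarrow> ('o,'m,'p) doct \<Rightarrow> 'm set \<Rightarrow> bool" where
  "restricted_Sigma_doctrine C D \<A> \<longleftrightarrow> doctrine C D \<and>
     (\<forall>f\<in>\<A>. \<forall>A B. f \<in> hom C A B \<longrightarrow>
       (\<exists>S. (\<forall>\<phi>\<in>Pd D A. S \<phi> \<in> Pd D B \<and>
               (\<forall>\<xi>\<in>Pd D B. Le D B (S \<phi>) \<xi> \<longleftrightarrow> Le D A \<phi> (Re D f \<xi>))) \<and>
            (\<forall>h g k E F. h \<in> hom C E B \<longrightarrow> g \<in> hom C F E \<longrightarrow> k \<in> hom C F A \<longrightarrow>
               pullback C h g f k \<longrightarrow>
               (\<forall>\<xi>\<in>Pd D B. \<forall>\<zeta>\<in>Pd D E.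
                  Le D E (Re D h (S (Re D f \<xi>))) \<zeta> \<longleftrightarrow> Le D F (Re D k (Re D f \<xi>)) (Re D g \<zeta>)))))"

end

theory Submission
  imports Defs
begin

text \<open>Let \<open>f = \<lceil>\<alpha>\<rceil> : {\<alpha>}\<^sup>o \<rightarrow> A\<close>. If \<open>{\<alpha>}\<^sup>o\<close> is not stably initial, AC provides an
  existential quantifier \<open>\<exists>\<close> along the projection \<open>{\<alpha>}\<^sup>o \<times> A \<rightarrow> A\<close>, computed as a
  reindexing, and the graph calculus of elementary doctrines shows that
  \<open>\<Sigma>\<^sub>f \<phi> = \<exists>(\<G>(f) \<and> \<pi>\<^sub>1\<^sup>*\<phi>)\<close> is left adjoint to \<open>f\<^sup>*\<close>. For Beck-Chevalley along
  \<open>h : E \<rightarrow> A\<close> one has \<open>\<Sigma>\<^sub>f f\<^sup>*\<xi> \<le> \<xi> \<and> Im f\<close> with \<open>Im f = \<exists>\<G>(f)\<close>; the eaco condition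
  says \<open>h\<^sup>* Im f = Im \<lceil>h\<^sup>*\<alpha>\<rceil>\<close>, and since \<open>\<lceil>h\<^sup>*\<alpha>\<rceil>\<close> factors through the pullback,
  \<open>k\<^sup>*f\<^sup>*\<xi> \<le> g\<^sup>*\<zeta>\<close> yields \<open>\<lceil>h\<^sup>*\<alpha>\<rceil>\<^sup>*h\<^sup>*\<xi> \<le> \<lceil>h\<^sup>*\<alpha>\<rceil>\<^sup>*\<zeta>\<close>, whence
  \<open>h\<^sup>*\<xi> \<and> Im \<lceil>h\<^sup>*\<alpha>\<rceil> \<le> \<zeta>\<close>.

  When some co-comprehension object is stably initial, fullness makes every object mapping
  into it have a trivial fibre; together with the fact that reindexing preserves \<open>\<bottom>\<close>, this
  lets \<open>\<Sigma>\<^sub>f = \<bottom>\<close> serve in the degenerate case.\<close>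

definition left_adjoint_reindex ::
    "('o,'m) cat \<Rightarrow> ('o,'m,'p) doct \<Rightarrow> 'm \<Rightarrow> 'o \<Rightarrow> 'o \<Rightarrow> ('p \<Rightarrow> 'p) \<Rightarrow> bool" where
  "left_adjoint_reindex C D f A B S \<longleftrightarrow>
     (\<forall>\<phi>\<in>Pd D A. S \<phi> \<in> Pd D B \<and> (\<forall>\<xi>\<in>Pd D B. Le D B (S \<phi>) \<xi> \<longleftrightarrow> Le D A \<phi> (Re D f \<xi>)))"

definition Beck_Chevalley ::
    "('o,'m) cat \<Rightarrow> ('o,'m,'p) doct \<Rightarrow> 'm \<Rightarrow> 'o \<Rightarrow> 'o \<Rightarrow> ('p \<Rightarrow> 'p) \<Rightarrow> bool" where
  "Beck_Chevalley C D f A B S \<longleftrightarrow>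
     (\<forall>h g k E F. h \<in> hom C E B \<longrightarrow> g \<in> hom C F E \<longrightarrow> k \<in> hom C F A \<longrightarrow> pullback C h g f k \<longrightarrow>
        (\<forall>\<xi>\<in>Pd D B. \<forall>\<zeta>\<in>Pd D E.
           Le D E (Re D h (S (Re D f \<xi>))) \<zeta> \<longleftrightarrow> Le D F (Re D k (Re D f \<xi>)) (Re D g \<zeta>)))"

lemma restricted_Sigma_doctrine_iff:
  "restricted_Sigma_doctrine C D \<A> \<longleftrightarrow> doctrine C D \<and>
     (\<forall>f\<in>\<A>. \<forall>A B. f \<in> hom C A B \<longrightarrow>
        (\<exists>S. left_adjoint_reindex C D f A B S \<and> Beck_Chevalley C D f A B S))"
  unfolding restricted_Sigma_doctrine_def left_adjoint_reindex_def Beck_Chevalley_def by blast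

section \<open>Doctrines over categories with finite products\<close>

named_theorems typing

locale fp_doctrine =
  fixes C :: "('o,'m) cat" and D :: "('o,'m,'p) doct"
  assumes doctrine: "doctrine C D"
begin

lemma finite_products: "finite_products C"
  using doctrine unfolding doctrine_def by blast

lemma category: "category C"
  using finite_products unfolding finite_products_def by blast

lemma hom_dom_Ob: "f \<in> hom C A B \<Longrightarrow> A \<in> Ob C"
  and hom_cod_Ob: "f \<in> hom C A B \<Longrightarrow> B \<in> Ob C"
  using category unfolding category_def hom_def by blast+

lemma id_hom: "A \<in> Ob C \<Longrightarrow> Idt C A \<in> hom C A A"
  and comp_hom: "f \<in> hom C A B \<Longrightarrow> g \<in> hom C B E \<Longrightarrow> Cmp C g f \<in> hom C A E"
  and comp_assoc: "f \<in> hom C A B \<Longrightarrow> g \<in> hom C B E \<Longrightarrow> h \<in> hom C E F \<Longrightarrow>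
        Cmp C h (Cmp C g f) = Cmp C (Cmp C h g) f"
  and id_comp: "f \<in> hom C A B \<Longrightarrow> Cmp C (Idt C B) f = f"
  and comp_id: "f \<in> hom C A B \<Longrightarrow> Cmp C f (Idt C A) = f"
  using category unfolding category_def by blast+

lemma Prd_Ob: "A \<in> Ob C \<Longrightarrow> B \<in> Ob C \<Longrightarrow> Prd C A B \<in> Ob C"
  and Pr1_hom: "A \<in> Ob C \<Longrightarrow> B \<in> Ob C \<Longrightarrow> Pr1 C A B \<in> hom C (Prd C A B) A"
  and Pr2_hom: "A \<in> Ob C \<Longrightarrow> B \<in> Ob C \<Longrightarrow> Pr2 C A B \<in> hom C (Prd C A B) B"
  and Pair_eta: "A \<in> Ob C \<Longrightarrow> B \<in> Ob C \<Longrightarrow> h \<in> hom C Z (Prd C A B) \<Longrightarrow>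
        h = Pair C (Cmp C (Pr1 C A B) h) (Cmp C (Pr2 C A B) h)"
  using finite_products unfolding finite_products_def by blast+

lemma Pair_hom: "f \<in> hom C Z A \<Longrightarrow> g \<in> hom C Z B \<Longrightarrow> Pair C f g \<in> hom C Z (Prd C A B)"
  and Pr1_Pair: "f \<in> hom C Z A \<Longrightarrow> g \<in> hom C Z B \<Longrightarrow> Cmp C (Pr1 C A B) (Pair C f g) = f"
  and Pr2_Pair: "f \<in> hom C Z A \<Longrightarrow> g \<in> hom C Z B \<Longrightarrow> Cmp C (Pr2 C A B) (Pair C f g) = g"
  using finite_products hom_cod_Ob unfolding finite_products_def by blast+

declare id_hom [typing] comp_hom [typing] Prd_Ob [typing] Pr1_hom [typing] Pr2_hom [typing]
  Pair_hom [typing]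

lemma Pair_comp:
  assumes f: "f \<in> hom C Z A" and g: "g \<in> hom C Z B" and u: "u \<in> hom C Y Z"
  shows "Cmp C (Pair C f g) u = Pair C (Cmp C f u) (Cmp C g u)"
proof -
  have A: "A \<in> Ob C" and B: "B \<in> Ob C" using f g hom_cod_Ob by auto
  have p: "Pair C f g \<in> hom C Z (Prd C A B)" using f g by (rule Pair_hom)
  have "Cmp C (Pr1 C A B) (Cmp C (Pair C f g) u) = Cmp C f u"
    using comp_assoc[OF u p Pr1_hom[OF A B]] Pr1_Pair[OF f g] by simp
  moreover have "Cmp C (Pr2 C A B) (Cmp C (Pair C f g) u) = Cmp C g u"
    using comp_assoc[OF u p Pr2_hom[OF A B]] Pr2_Pair[OF f g] by simp
  ultimately show ?thesis
    using Pair_eta[OF A B comp_hom[OF u p]] by simp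
qed

lemma Pair_diag_comp: "v \<in> hom C W A \<Longrightarrow> Pair C v v = Cmp C (Pair C (Idt C A) (Idt C A)) v"
  using Pair_comp[OF id_hom id_hom] id_comp hom_cod_Ob by metis

lemma pullbackE:
  assumes "pullback C h g f k" and "h \<in> hom C E B" "g \<in> hom C F E" "k \<in> hom C F A" "f \<in> hom C A B"
  shows "Cmp C h g = Cmp C f k"
    and "\<And>Z u v. u \<in> hom C Z E \<Longrightarrow> v \<in> hom C Z A \<Longrightarrow> Cmp C h u = Cmp C f v \<Longrightarrow>
           \<exists>w. w \<in> hom C Z F \<and> Cmp C g w = u \<and> Cmp C k w = v"
proof -
  obtain A' B' E' F' where "f \<in> hom C A' B'" "h \<in> hom C E' B'" "g \<in> hom C F' E'" "k \<in> hom C F' A'"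
    and square: "Cmp C h g = Cmp C f k"
    and universal: "\<forall>Z u v. u \<in> hom C Z E' \<longrightarrow> v \<in> hom C Z A' \<longrightarrow> Cmp C h u = Cmp C f v \<longrightarrow>
           (\<exists>!w. w \<in> hom C Z F' \<and> Cmp C g w = u \<and> Cmp C k w = v)"
    using assms(1) unfolding pullback_def by blast
  moreover have "A' = A" "E' = E" "F' = F"
    using calculation assms(2-5) unfolding hom_def by auto
  ultimately show "Cmp C h g = Cmp C f k"
    and "\<And>Z u v. u \<in> hom C Z E \<Longrightarrow> v \<in> hom C Z A \<Longrightarrow> Cmp C h u = Cmp C f v \<Longrightarrow>
           \<exists>w. w \<in> hom C Z F \<and> Cmp C g w = u \<and> Cmp C k w = v"
    by blast+
qed

lemma Re_in: "f \<in> hom C A B \<Longrightarrow> b \<in> Pd D B \<Longrightarrow> Re D f b \<in> Pd D A"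
  and Re_mono: "f \<in> hom C A B \<Longrightarrow> b \<in> Pd D B \<Longrightarrow> c \<in> Pd D B \<Longrightarrow> Le D B b c \<Longrightarrow>
        Le D A (Re D f b) (Re D f c)"
  and Re_id: "A \<in> Ob C \<Longrightarrow> a \<in> Pd D A \<Longrightarrow> Re D (Idt C A) a = a"
  and Re_comp: "f \<in> hom C A B \<Longrightarrow> g \<in> hom C B E \<Longrightarrow> c \<in> Pd D E \<Longrightarrow>
        Re D (Cmp C g f) c = Re D f (Re D g c)"
  using doctrine unfolding doctrine_def by blast+

declare Re_in [typing]

lemma Le_refl: "A \<in> Ob C \<Longrightarrow> a \<in> Pd D A \<Longrightarrow> Le D A a a"
  and Le_antisym: "A \<in> Ob C \<Longrightarrow> a \<in> Pd D A \<Longrightarrow> b \<in> Pd D A \<Longrightarrow> Le D A a b \<Longrightarrow> Le D A b a \<Longrightarrow>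
        a = b"
  and Le_trans: "A \<in> Ob C \<Longrightarrow> a \<in> Pd D A \<Longrightarrow> b \<in> Pd D A \<Longrightarrow> c \<in> Pd D A \<Longrightarrow>
        Le D A a b \<Longrightarrow> Le D A b c \<Longrightarrow> Le D A a c"
proof -
  have "\<forall>A\<in>Ob C. (\<forall>a\<in>Pd D A. Le D A a a) \<and>
        (\<forall>a\<in>Pd D A. \<forall>b\<in>Pd D A. Le D A a b \<longrightarrow> Le D A b a \<longrightarrow> a = b) \<and>
        (\<forall>a\<in>Pd D A. \<forall>b\<in>Pd D A. \<forall>c\<in>Pd D A. Le D A a b \<longrightarrow> Le D A b c \<longrightarrow> Le D A a c)"
    using doctrine unfolding doctrine_def by (elim conjE)
  then show "A \<in> Ob C \<Longrightarrow> a \<in> Pd D A \<Longrightarrow> Le D A a a"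
    and "A \<in> Ob C \<Longrightarrow> a \<in> Pd D A \<Longrightarrow> b \<in> Pd D A \<Longrightarrow> Le D A a b \<Longrightarrow> Le D A b a \<Longrightarrow> a = b"
    and "A \<in> Ob C \<Longrightarrow> a \<in> Pd D A \<Longrightarrow> b \<in> Pd D A \<Longrightarrow> c \<in> Pd D A \<Longrightarrow>
        Le D A a b \<Longrightarrow> Le D A b c \<Longrightarrow> Le D A a c"
    by blast+
qed

lemma Re_Pair_Pr1:
  "f \<in> hom C Z A \<Longrightarrow> g \<in> hom C Z B \<Longrightarrow> a \<in> Pd D A \<Longrightarrow>
     Re D (Pair C f g) (Re D (Pr1 C A B) a) = Re D f a"
  and Re_Pair_Pr2:
  "f \<in> hom C Z A \<Longrightarrow> g \<in> hom C Z B \<Longrightarrow> b \<in> Pd D B \<Longrightarrow>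
     Re D (Pair C f g) (Re D (Pr2 C A B) b) = Re D g b"
  by (metis Re_comp Pair_hom Pr1_hom Pr1_Pair hom_cod_Ob)
    (metis Re_comp Pair_hom Pr2_hom Pr2_Pair hom_cod_Ob)

lemma left_adjoint_square_le:
  assumes S: "left_adjoint_reindex C D f A B S"
    and f: "f \<in> hom C A B" and h: "h \<in> hom C E B" and g: "g \<in> hom C F E" and k: "k \<in> hom C F A"
    and square: "Cmp C h g = Cmp C f k" and \<phi>: "\<phi> \<in> Pd D A" and \<zeta>: "\<zeta> \<in> Pd D E"
    and le: "Le D E (Re D h (S \<phi>)) \<zeta>"
  shows "Le D F (Re D k \<phi>) (Re D g \<zeta>)"
proof -
  have S\<phi>: "S \<phi> \<in> Pd D B" and unit: "Le D A \<phi> (Re D f (S \<phi>))"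
    using S \<phi> Le_refl[OF hom_cod_Ob[OF f]] unfolding left_adjoint_reindex_def by blast+
  have "Le D F (Re D k \<phi>) (Re D k (Re D f (S \<phi>)))"
    by (rule Re_mono[OF k \<phi> _ unit]) (rule typing f S\<phi>)+
  also have "Re D k (Re D f (S \<phi>)) = Re D g (Re D h (S \<phi>))"
    using Re_comp[OF k f S\<phi>] Re_comp[OF g h S\<phi>] square by simp
  finally have "Le D F (Re D k \<phi>) (Re D g (Re D h (S \<phi>)))" .
  moreover have "Le D F (Re D g (Re D h (S \<phi>))) (Re D g \<zeta>)"
    by (rule Re_mono[OF g Re_in[OF h S\<phi>] \<zeta> le])
  ultimately show ?thesis
    by (rule Le_trans[OF hom_dom_Ob[OF g], rotated 3]) (rule typing f g h k S\<phi> \<phi> \<zeta>)+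
qed

end

locale primary_doctrine =
  fixes C :: "('o,'m) cat" and D :: "('o,'m,'p) doct" and Meet :: "'o \<Rightarrow> 'p \<Rightarrow> 'p \<Rightarrow> 'p"
  assumes primary: "primary C D Meet"

sublocale primary_doctrine \<subseteq> fp_doctrine
  using primary unfolding primary_def by unfold_locales blast

context primary_doctrine
begin

lemma Meet_in: "A \<in> Ob C \<Longrightarrow> a \<in> Pd D A \<Longrightarrow> b \<in> Pd D A \<Longrightarrow> Meet A a b \<in> Pd D A"
  and Meet_le1: "A \<in> Ob C \<Longrightarrow> a \<in> Pd D A \<Longrightarrow> b \<in> Pd D A \<Longrightarrow> Le D A (Meet A a b) a"
  and Meet_le2: "A \<in> Ob C \<Longrightarrow> a \<in> Pd D A \<Longrightarrow> b \<in> Pd D A \<Longrightarrow> Le D A (Meet A a b) b"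
  and Meet_greatest: "A \<in> Ob C \<Longrightarrow> a \<in> Pd D A \<Longrightarrow> b \<in> Pd D A \<Longrightarrow> c \<in> Pd D A \<Longrightarrow>
        Le D A c a \<Longrightarrow> Le D A c b \<Longrightarrow> Le D A c (Meet A a b)"
  and Re_Meet: "f \<in> hom C A B \<Longrightarrow> a \<in> Pd D B \<Longrightarrow> b \<in> Pd D B \<Longrightarrow>
        Re D f (Meet B a b) = Meet A (Re D f a) (Re D f b)"
  using primary unfolding primary_def by blast+

declare Meet_in [typing]

lemma Meet_commute: "A \<in> Ob C \<Longrightarrow> a \<in> Pd D A \<Longrightarrow> b \<in> Pd D A \<Longrightarrow> Meet A a b = Meet A b a"
  by (rule Le_antisym) (auto intro: Meet_greatest Meet_le1 Meet_le2 Meet_in)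

lemma Meet_mono_right: "A \<in> Ob C \<Longrightarrow> a \<in> Pd D A \<Longrightarrow> b \<in> Pd D A \<Longrightarrow> b' \<in> Pd D A \<Longrightarrow>
    Le D A b b' \<Longrightarrow> Le D A (Meet A a b) (Meet A a b')"
  by (rule Meet_greatest) (auto intro: Meet_le1 Meet_le2 Meet_in Le_trans[OF _ _ _ _ Meet_le2])

lemma Meet_mono_left: "A \<in> Ob C \<Longrightarrow> a \<in> Pd D A \<Longrightarrow> a' \<in> Pd D A \<Longrightarrow> b \<in> Pd D A \<Longrightarrow>
    Le D A a a' \<Longrightarrow> Le D A (Meet A a b) (Meet A a' b)"
  by (rule Meet_greatest) (auto intro: Meet_le1 Meet_le2 Meet_in Le_trans[OF _ _ _ _ Meet_le1])

end

section \<open>Equality in elementary doctrines\<close>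

locale elementary_doctrine =
  fixes C :: "('o,'m) cat" and D :: "('o,'m,'p) doct" and Meet :: "'o \<Rightarrow> 'p \<Rightarrow> 'p \<Rightarrow> 'p"
    and Delta :: "'o \<Rightarrow> 'p"
  assumes elementary: "elementary C D Meet Delta"

sublocale elementary_doctrine \<subseteq> primary_doctrine
  using elementary unfolding elementary_def by unfold_locales blast

context elementary_doctrine
begin

abbreviation "\<pi>\<^sub>1 X A \<equiv> Cmp C (Pr1 C X A) (Pr1 C (Prd C X A) A)"
abbreviation "\<pi>\<^sub>2 X A \<equiv> Cmp C (Pr2 C X A) (Pr1 C (Prd C X A) A)"
abbreviation "\<pi>\<^sub>3 X A \<equiv> Pr2 C (Prd C X A) A"
abbreviation "id_times_diag X A \<equiv> Pair C (Idt C (Prd C X A)) (Pr2 C X A)"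
abbreviation "\<delta>\<^sub>2\<^sub>3 X A \<equiv> Re D (Pair C (\<pi>\<^sub>2 X A) (\<pi>\<^sub>3 X A)) (Delta A)"
abbreviation "\<delta>\<^sub>3\<^sub>2 X A \<equiv> Re D (Pair C (\<pi>\<^sub>3 X A) (\<pi>\<^sub>2 X A)) (Delta A)"

lemma Delta_in [typing]: "A \<in> Ob C \<Longrightarrow> Delta A \<in> Pd D (Prd C A A)"
  using elementary unfolding elementary_def by blast

lemma projections_hom [typing]:
  assumes "X \<in> Ob C" "A \<in> Ob C"
  shows "\<pi>\<^sub>1 X A \<in> hom C (Prd C (Prd C X A) A) X" "\<pi>\<^sub>2 X A \<in> hom C (Prd C (Prd C X A) A) A"
    "\<pi>\<^sub>3 X A \<in> hom C (Prd C (Prd C X A) A) A"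
    "id_times_diag X A \<in> hom C (Prd C X A) (Prd C (Prd C X A) A)"
  by (rule typing assms)+

lemma delta_in [typing]:
  "X \<in> Ob C \<Longrightarrow> A \<in> Ob C \<Longrightarrow> \<delta>\<^sub>2\<^sub>3 X A \<in> Pd D (Prd C (Prd C X A) A)"
  "X \<in> Ob C \<Longrightarrow> A \<in> Ob C \<Longrightarrow> \<delta>\<^sub>3\<^sub>2 X A \<in> Pd D (Prd C (Prd C X A) A)"
  by (rule Re_in[OF Pair_hom[OF projections_hom(2,3)] Delta_in]
      Re_in[OF Pair_hom[OF projections_hom(3,2)] Delta_in]; assumption)+

lemma projections_id_times_diag:
  assumes X: "X \<in> Ob C" and A: "A \<in> Ob C"
  shows "Cmp C (Pr1 C (Prd C X A) A) (id_times_diag X A) = Idt C (Prd C X A)"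
    "Cmp C (\<pi>\<^sub>2 X A) (id_times_diag X A) = Pr2 C X A"
    "Cmp C (\<pi>\<^sub>3 X A) (id_times_diag X A) = Pr2 C X A"
proof -
  have i: "Idt C (Prd C X A) \<in> hom C (Prd C X A) (Prd C X A)"
    and p: "Pr2 C X A \<in> hom C (Prd C X A) A"
    by (rule typing X A)+
  show 1: "Cmp C (Pr1 C (Prd C X A) A) (id_times_diag X A) = Idt C (Prd C X A)"
    and "Cmp C (\<pi>\<^sub>3 X A) (id_times_diag X A) = Pr2 C X A"
    using Pr1_Pair[OF i p] Pr2_Pair[OF i p] by simp_all
  show "Cmp C (\<pi>\<^sub>2 X A) (id_times_diag X A) = Pr2 C X A"
    using comp_assoc[OF projections_hom(4)[OF X A] Pr1_hom[OF Prd_Ob[OF X A] A] Pr2_hom[OF X A]]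
      1 comp_id[OF Pr2_hom[OF X A]] by simp
qed

text \<open>The defining adjunction, with \<open>\<langle>\<pi>\<^sub>1, \<pi>\<^sub>2\<rangle>\<close> rewritten as the first projection of
  \<open>(X \<times> A) \<times> A\<close>.\<close>

lemma elementary_adjunction:
  assumes X: "X \<in> Ob C" and A: "A \<in> Ob C"
    and \<psi>: "\<psi> \<in> Pd D (Prd C X A)" and \<phi>: "\<phi> \<in> Pd D (Prd C (Prd C X A) A)"
  shows "Le D (Prd C (Prd C X A) A)
            (Meet (Prd C (Prd C X A) A) (Re D (Pr1 C (Prd C X A) A) \<psi>) (\<delta>\<^sub>2\<^sub>3 X A)) \<phi>
     \<longleftrightarrow> Le D (Prd C X A) \<psi> (Re D (id_times_diag X A) \<phi>)"
proof -
  have "Pair C (\<pi>\<^sub>1 X A) (\<pi>\<^sub>2 X A) = Pr1 C (Prd C X A) A"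
    using Pair_eta[OF X A Pr1_hom[OF Prd_Ob[OF X A] A]] by simp
  moreover have "\<forall>\<psi>\<in>Pd D (Prd C X A). \<forall>\<phi>\<in>Pd D (Prd C (Prd C X A) A).
      Le D (Prd C (Prd C X A) A)
        (Meet (Prd C (Prd C X A) A) (Re D (Pair C (\<pi>\<^sub>1 X A) (\<pi>\<^sub>2 X A)) \<psi>) (\<delta>\<^sub>2\<^sub>3 X A)) \<phi>
      \<longleftrightarrow> Le D (Prd C X A) \<psi> (Re D (id_times_diag X A) \<phi>)"
    using elementary X A unfolding elementary_def Let_def by blast
  ultimately show ?thesis using \<psi> \<phi> by simp
qed

definition Top :: "'o \<Rightarrow> 'p" where
  "Top A = Re D (Pair C (Idt C A) (Idt C A)) (Delta A)"

lemma Top_in [typing]: "A \<in> Ob C \<Longrightarrow> Top A \<in> Pd D A"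
  unfolding Top_def by (rule Re_in[OF Pair_hom[OF id_hom id_hom] Delta_in])

lemma Re_Pair_Delta_eq_Re_Top:
  assumes p: "p \<in> hom C T A" and q: "q \<in> hom C T A" and u: "u \<in> hom C W T"
    and pu: "Cmp C p u = w" and qu: "Cmp C q u = w"
  shows "Re D u (Re D (Pair C p q) (Delta A)) = Re D w (Top A)"
proof -
  have A: "A \<in> Ob C" and w: "w \<in> hom C W A" using p u pu hom_cod_Ob comp_hom by blast+
  have "Re D u (Re D (Pair C p q) (Delta A)) = Re D (Pair C w w) (Delta A)"
    using Re_comp[OF u Pair_hom[OF p q] Delta_in[OF A]] Pair_comp[OF p q u] pu qu by simp
  also have "\<dots> = Re D w (Top A)"
    unfolding Pair_diag_comp[OF w] Top_def by (rule Re_comp[OF w _ Delta_in[OF A]]) (rule typing A)+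
  finally show ?thesis .
qed

text \<open>\<open>Top A\<close> is the top element of \<open>P(A)\<close>, and so are its reindexings: take the unit of the
  elementary adjunction at \<open>\<pi>\<^sub>1\<^sup>*\<psi>\<close> and reindex along \<open>\<langle>id, v\<rangle>\<close>.\<close>

lemma Le_Re_Top:
  assumes v: "v \<in> hom C W A" and \<psi>: "\<psi> \<in> Pd D W"
  shows "Le D W \<psi> (Re D v (Top A))"
proof -
  have W: "W \<in> Ob C" and A: "A \<in> Ob C" using v hom_dom_Ob hom_cod_Ob by blast+
  let ?WA = "Prd C W A" and ?T = "Prd C (Prd C W A) A"
  define \<psi>' where "\<psi>' = Re D (Pr1 C W A) \<psi>"
  have WA: "?WA \<in> Ob C" and T: "?T \<in> Ob C" and \<psi>': "\<psi>' \<in> Pd D ?WA" and \<delta>: "\<delta>\<^sub>2\<^sub>3 W A \<in> Pd D ?T"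
    and top: "Re D (Pr2 C W A) (Top A) \<in> Pd D ?WA"
    unfolding \<psi>'_def by (rule typing W A \<psi>)+
  have m: "Meet ?T (Re D (Pr1 C ?WA A) \<psi>') (\<delta>\<^sub>2\<^sub>3 W A) \<in> Pd D ?T" by (rule typing WA A \<psi>' \<delta>)+
  have "Le D ?WA \<psi>' (Re D (id_times_diag W A) (Meet ?T (Re D (Pr1 C ?WA A) \<psi>') (\<delta>\<^sub>2\<^sub>3 W A)))"
    using elementary_adjunction[OF W A \<psi>' m] Le_refl[OF T m] by blast
  also have "Re D (id_times_diag W A) (Meet ?T (Re D (Pr1 C ?WA A) \<psi>') (\<delta>\<^sub>2\<^sub>3 W A))
      = Meet ?WA \<psi>' (Re D (Pr2 C W A) (Top A))"
    using Re_Meet[OF projections_hom(4)[OF W A] Re_in[OF Pr1_hom[OF WA A] \<psi>'] \<delta>]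
      Re_comp[OF projections_hom(4)[OF W A] Pr1_hom[OF WA A] \<psi>'] Re_id[OF WA \<psi>']
      Re_Pair_Delta_eq_Re_Top[OF projections_hom(2,3,4)[OF W A]
        projections_id_times_diag(2,3)[OF W A]]
      projections_id_times_diag(1)[OF W A] by simp
  finally have "Le D ?WA \<psi>' (Re D (Pr2 C W A) (Top A))"
    using Le_trans[OF WA \<psi>' _ top _ Meet_le2[OF WA \<psi>' top]] Meet_in[OF WA \<psi>' top] by blast
  then have "Le D W (Re D (Pair C (Idt C W) v) \<psi>')
      (Re D (Pair C (Idt C W) v) (Re D (Pr2 C W A) (Top A)))"
    by (rule Re_mono[OF Pair_hom[OF id_hom[OF W] v] \<psi>' top])
  then show ?thesis
    unfolding \<psi>'_def
    using Re_Pair_Pr1[OF id_hom[OF W] v \<psi>] Re_Pair_Pr2[OF id_hom[OF W] v Top_in[OF A]]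
      Re_id[OF W \<psi>] by simp
qed

lemma Le_Re_Pair_Delta:
  assumes p: "p \<in> hom C T A" and q: "q \<in> hom C T A" and u: "u \<in> hom C W T"
    and eq: "Cmp C p u = Cmp C q u" and \<psi>: "\<psi> \<in> Pd D W"
  shows "Le D W \<psi> (Re D u (Re D (Pair C p q) (Delta A)))"
  using Re_Pair_Delta_eq_Re_Top[OF p q u refl eq[symmetric]] Le_Re_Top[OF comp_hom[OF u p] \<psi>]
  by simp

lemma diagonal_subst:
  assumes X: "X \<in> Ob C" and A: "A \<in> Ob C" and \<xi>: "\<xi> \<in> Pd D A"
  shows "Le D (Prd C (Prd C X A) A)
           (Meet (Prd C (Prd C X A) A) (Re D (\<pi>\<^sub>2 X A) \<xi>) (\<delta>\<^sub>2\<^sub>3 X A)) (Re D (\<pi>\<^sub>3 X A) \<xi>)"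
proof -
  have XA: "Prd C X A \<in> Ob C" and \<psi>: "Re D (Pr2 C X A) \<xi> \<in> Pd D (Prd C X A)"
    and \<phi>: "Re D (\<pi>\<^sub>3 X A) \<xi> \<in> Pd D (Prd C (Prd C X A) A)" by (rule typing X A \<xi>)+
  have "Re D (id_times_diag X A) (Re D (\<pi>\<^sub>3 X A) \<xi>) = Re D (Pr2 C X A) \<xi>"
    using Re_comp[OF projections_hom(4,3)[OF X A] \<xi>] projections_id_times_diag(3)[OF X A] by simp
  moreover have "Re D (Pr1 C (Prd C X A) A) (Re D (Pr2 C X A) \<xi>) = Re D (\<pi>\<^sub>2 X A) \<xi>"
    using Re_comp[OF Pr1_hom[OF XA A] Pr2_hom[OF X A] \<xi>] by simp
  ultimately show ?thesis
    using elementary_adjunction[OF X A \<psi> \<phi>] Le_refl[OF XA \<psi>] by simp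
qed

lemma diagonal_sym:
  assumes X: "X \<in> Ob C" and A: "A \<in> Ob C"
  shows "Le D (Prd C (Prd C X A) A) (\<delta>\<^sub>2\<^sub>3 X A) (\<delta>\<^sub>3\<^sub>2 X A)"
proof -
  let ?T = "Prd C (Prd C X A) A" and ?\<psi> = "Re D (Pr2 C X A) (Top A)"
  have T: "?T \<in> Ob C" and XA: "Prd C X A \<in> Ob C" and \<psi>: "?\<psi> \<in> Pd D (Prd C X A)"
    and \<psi>1: "Re D (Pr1 C (Prd C X A) A) ?\<psi> \<in> Pd D ?T"
    and d23: "\<delta>\<^sub>2\<^sub>3 X A \<in> Pd D ?T" and d32: "\<delta>\<^sub>3\<^sub>2 X A \<in> Pd D ?T"
    by (rule typing X A)+
  have "Le D (Prd C X A) ?\<psi> (Re D (id_times_diag X A) (\<delta>\<^sub>3\<^sub>2 X A))"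
    by (rule Le_Re_Pair_Delta[OF projections_hom(3,2,4)[OF X A]])
      (simp_all add: projections_id_times_diag X A \<psi>)
  then have "Le D ?T (Meet ?T (Re D (Pr1 C (Prd C X A) A) ?\<psi>) (\<delta>\<^sub>2\<^sub>3 X A)) (\<delta>\<^sub>3\<^sub>2 X A)"
    using elementary_adjunction[OF X A \<psi> d32] by blast
  moreover have "Le D ?T (\<delta>\<^sub>2\<^sub>3 X A) (Meet ?T (Re D (Pr1 C (Prd C X A) A) ?\<psi>) (\<delta>\<^sub>2\<^sub>3 X A))"
    using Re_comp[OF Pr1_hom[OF XA A] Pr2_hom[OF X A] Top_in[OF A]]
      Le_Re_Top[OF projections_hom(2)[OF X A] d23]
    by (intro Meet_greatest[OF T \<psi>1 d23 d23] Le_refl[OF T d23]) simp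
  ultimately show ?thesis by (rule Le_trans[OF T d23 Meet_in[OF T \<psi>1 d23] d32, rotated])
qed

lemma projections_Pair_Pair:
  assumes p: "p \<in> hom C W A" and q: "q \<in> hom C W A"
  defines "u \<equiv> Pair C (Pair C (Idt C W) p) q"
  shows "u \<in> hom C W (Prd C (Prd C W A) A)"
    and "Cmp C (\<pi>\<^sub>2 W A) u = p" and "Cmp C (\<pi>\<^sub>3 W A) u = q"
proof -
  have W: "W \<in> Ob C" and A: "A \<in> Ob C" using p hom_dom_Ob hom_cod_Ob by blast+
  have i: "Pair C (Idt C W) p \<in> hom C W (Prd C W A)" by (rule typing W p)+
  show u: "u \<in> hom C W (Prd C (Prd C W A) A)" unfolding u_def by (rule typing i q)+
  show "Cmp C (\<pi>\<^sub>2 W A) u = p"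
    using comp_assoc[OF u Pr1_hom[OF Prd_Ob[OF W A] A] Pr2_hom[OF W A]]
      Pr1_Pair[OF i q] Pr2_Pair[OF id_hom[OF W] p] unfolding u_def by simp
  show "Cmp C (\<pi>\<^sub>3 W A) u = q" unfolding u_def using Pr2_Pair[OF i q] .
qed

lemma Re_Pair_Delta_reindex:
  assumes p: "p \<in> hom C W A" and q: "q \<in> hom C W A"
  defines "u \<equiv> Pair C (Pair C (Idt C W) p) q"
  shows "Re D u (\<delta>\<^sub>2\<^sub>3 W A) = Re D (Pair C p q) (Delta A)"
    and "Re D u (\<delta>\<^sub>3\<^sub>2 W A) = Re D (Pair C q p) (Delta A)"
proof -
  have W: "W \<in> Ob C" and A: "A \<in> Ob C" using p hom_dom_Ob hom_cod_Ob by blast+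
  note u = projections_Pair_Pair[OF p q, folded u_def]
  show "Re D u (\<delta>\<^sub>2\<^sub>3 W A) = Re D (Pair C p q) (Delta A)"
    using Re_comp[OF u(1) Pair_hom[OF projections_hom(2,3)[OF W A]] Delta_in[OF A]]
      Pair_comp[OF projections_hom(2,3)[OF W A] u(1)] u(2,3) by simp
  show "Re D u (\<delta>\<^sub>3\<^sub>2 W A) = Re D (Pair C q p) (Delta A)"
    using Re_comp[OF u(1) Pair_hom[OF projections_hom(3,2)[OF W A]] Delta_in[OF A]]
      Pair_comp[OF projections_hom(3,2)[OF W A] u(1)] u(2,3) by simp
qed

lemma Re_Pair_Delta_sym:
  assumes p: "p \<in> hom C W A" and q: "q \<in> hom C W A"
  shows "Le D W (Re D (Pair C p q) (Delta A)) (Re D (Pair C q p) (Delta A))"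
proof -
  have W: "W \<in> Ob C" and A: "A \<in> Ob C" using p hom_dom_Ob hom_cod_Ob by blast+
  show ?thesis
    using Re_mono[OF projections_Pair_Pair(1)[OF p q] _ _ diagonal_sym[OF W A]]
    by (simp add: Re_Pair_Delta_reindex[OF p q] typing W A)
qed

lemma Re_Pair_Delta_subst:
  assumes p: "p \<in> hom C W A" and q: "q \<in> hom C W A" and \<xi>: "\<xi> \<in> Pd D A"
  shows "Le D W (Meet W (Re D (Pair C p q) (Delta A)) (Re D p \<xi>)) (Re D q \<xi>)"
proof -
  have W: "W \<in> Ob C" and A: "A \<in> Ob C" using p hom_dom_Ob hom_cod_Ob by blast+
  define u where "u = Pair C (Pair C (Idt C W) p) q"
  note u = projections_Pair_Pair[OF p q, folded u_def]
  have "Le D W (Re D u (Meet (Prd C (Prd C W A) A) (Re D (\<pi>\<^sub>2 W A) \<xi>) (\<delta>\<^sub>2\<^sub>3 W A)))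
              (Re D u (Re D (\<pi>\<^sub>3 W A) \<xi>))"
    by (rule Re_mono[OF u(1) _ _ diagonal_subst[OF W A \<xi>]]) (rule typing W A \<xi>)+
  moreover have "Re D u (Re D (\<pi>\<^sub>2 W A) \<xi>) = Re D p \<xi>"
    using Re_comp[OF u(1) projections_hom(2)[OF W A] \<xi>] u(2) by simp
  then have "Re D u (Meet (Prd C (Prd C W A) A) (Re D (\<pi>\<^sub>2 W A) \<xi>) (\<delta>\<^sub>2\<^sub>3 W A))
      = Meet W (Re D (Pair C p q) (Delta A)) (Re D p \<xi>)"
    using Re_Meet[OF u(1) Re_in[OF projections_hom(2)[OF W A] \<xi>] delta_in(1)[OF W A]]
      Re_Pair_Delta_reindex(1)[OF p q, folded u_def]
      Meet_commute[OF W Re_in[OF p \<xi>] Re_in[OF Pair_hom[OF p q] Delta_in[OF A]]]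
    by simp
  moreover have "Re D u (Re D (\<pi>\<^sub>3 W A) \<xi>) = Re D q \<xi>"
    using Re_comp[OF u(1) projections_hom(3)[OF W A] \<xi>] u(3) by simp
  ultimately show ?thesis by simp
qed

lemma graph_eq: "f \<in> hom C X A \<Longrightarrow>
    graph C D Delta f = Re D (Pair C (Cmp C f (Pr1 C X A)) (Pr2 C X A)) (Delta A)"
  unfolding graph_def Let_def hom_def by auto

lemma graph_in [typing]:
  assumes f: "f \<in> hom C X A"
  shows "graph C D Delta f \<in> Pd D (Prd C X A)"
proof -
  have X: "X \<in> Ob C" and A: "A \<in> Ob C" using f hom_dom_Ob hom_cod_Ob by blast+
  show ?thesis
    unfolding graph_eq[OF f] by (rule typing X A f)+
qed

lemma graph_subst:
  assumes f: "f \<in> hom C X A" and \<xi>: "\<xi> \<in> Pd D A"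
  shows "Le D (Prd C X A) (Meet (Prd C X A) (graph C D Delta f) (Re D (Cmp C f (Pr1 C X A)) \<xi>))
           (Re D (Pr2 C X A) \<xi>)"
  unfolding graph_eq[OF f]
  by (rule Re_Pair_Delta_subst[OF _ _ \<xi>]) (use f hom_dom_Ob hom_cod_Ob in \<open>blast intro: typing\<close>)+

lemma graph_subst_sym:
  assumes f: "f \<in> hom C X A" and \<xi>: "\<xi> \<in> Pd D A"
  shows "Le D (Prd C X A) (Meet (Prd C X A) (graph C D Delta f) (Re D (Pr2 C X A) \<xi>))
           (Re D (Cmp C f (Pr1 C X A)) \<xi>)"
proof -
  have X: "X \<in> Ob C" and A: "A \<in> Ob C" using f hom_dom_Ob hom_cod_Ob by blast+
  have p: "Cmp C f (Pr1 C X A) \<in> hom C (Prd C X A) A" and q: "Pr2 C X A \<in> hom C (Prd C X A) A"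
    and XA: "Prd C X A \<in> Ob C" by (rule typing X A f)+
  let ?G' = "Re D (Pair C (Pr2 C X A) (Cmp C f (Pr1 C X A))) (Delta A)"
  have G: "graph C D Delta f \<in> Pd D (Prd C X A)" and G': "?G' \<in> Pd D (Prd C X A)"
    and q\<xi>: "Re D (Pr2 C X A) \<xi> \<in> Pd D (Prd C X A)"
    and p\<xi>: "Re D (Cmp C f (Pr1 C X A)) \<xi> \<in> Pd D (Prd C X A)"
    by (rule typing f Re_in[OF Pair_hom[OF q p] Delta_in[OF A]] X A \<xi>)+
  have "Le D (Prd C X A) (Meet (Prd C X A) (graph C D Delta f) (Re D (Pr2 C X A) \<xi>))
          (Meet (Prd C X A) ?G' (Re D (Pr2 C X A) \<xi>))"
    by (rule Meet_mono_left[OF XA G G' q\<xi>]) (unfold graph_eq[OF f], rule Re_Pair_Delta_sym[OF p q])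
  then show ?thesis
    using Re_Pair_Delta_subst[OF q p \<xi>]
      Le_trans[OF XA Meet_in[OF XA G q\<xi>] Meet_in[OF XA G' q\<xi>] p\<xi>] by blast
qed

lemma Le_Re_graph:
  assumes f: "f \<in> hom C X A" and \<psi>: "\<psi> \<in> Pd D X"
  shows "Le D X \<psi> (Re D (Pair C (Idt C X) f) (graph C D Delta f))"
proof -
  have X: "X \<in> Ob C" and A: "A \<in> Ob C" using f hom_dom_Ob hom_cod_Ob by blast+
  have s: "Pair C (Idt C X) f \<in> hom C X (Prd C X A)" by (rule typing X f)+
  have eq: "Cmp C (Cmp C f (Pr1 C X A)) (Pair C (Idt C X) f)
      = Cmp C (Pr2 C X A) (Pair C (Idt C X) f)"
    using comp_assoc[OF s Pr1_hom[OF X A] f] Pr1_Pair[OF id_hom[OF X] f] Pr2_Pair[OF id_hom[OF X] f]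
      comp_id[OF f] by simp
  show ?thesis
    unfolding graph_eq[OF f]
    by (rule Le_Re_Pair_Delta[OF comp_hom[OF Pr1_hom[OF X A] f] Pr2_hom[OF X A] s eq \<psi>])
qed

text \<open>\<open>\<exists>\<^sub>\<pi>\<^sub>2(\<G>(f) \<and> \<pi>\<^sub>1\<^sup>*\<phi>)\<close> is therefore left adjoint to \<open>f\<^sup>*\<close> whenever the existential exists.\<close>

lemma graph_adjunction:
  assumes f: "f \<in> hom C X A" and \<phi>: "\<phi> \<in> Pd D X" and \<xi>: "\<xi> \<in> Pd D A"
  shows "Le D (Prd C X A) (Meet (Prd C X A) (graph C D Delta f) (Re D (Pr1 C X A) \<phi>))
       (Re D (Pr2 C X A) \<xi>) \<longleftrightarrow> Le D X \<phi> (Re D f \<xi>)"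
proof -
  have X: "X \<in> Ob C" and A: "A \<in> Ob C" using f hom_dom_Ob hom_cod_Ob by blast+
  let ?XA = "Prd C X A" and ?G = "graph C D Delta f" and ?s = "Pair C (Idt C X) f"
  have XA: "?XA \<in> Ob C" and G: "?G \<in> Pd D ?XA" and s: "?s \<in> hom C X ?XA"
    and \<phi>1: "Re D (Pr1 C X A) \<phi> \<in> Pd D ?XA" and f\<xi>: "Re D f \<xi> \<in> Pd D X"
    and f\<xi>1: "Re D (Pr1 C X A) (Re D f \<xi>) \<in> Pd D ?XA" and \<xi>2: "Re D (Pr2 C X A) \<xi> \<in> Pd D ?XA"
    by (rule typing X A f \<phi> \<xi>)+
  have M: "Meet ?XA ?G (Re D (Pr1 C X A) \<phi>) \<in> Pd D ?XA" by (rule typing XA G \<phi>1)+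
  show ?thesis
  proof
    assume le: "Le D ?XA (Meet ?XA ?G (Re D (Pr1 C X A) \<phi>)) (Re D (Pr2 C X A) \<xi>)"
    have sG: "Re D ?s ?G \<in> Pd D X" by (rule typing s G)+
    have "Le D X \<phi> (Meet X (Re D ?s ?G) \<phi>)"
      by (rule Meet_greatest[OF X sG \<phi> \<phi> Le_Re_graph[OF f \<phi>] Le_refl[OF X \<phi>]])
    also have "Meet X (Re D ?s ?G) \<phi> = Re D ?s (Meet ?XA ?G (Re D (Pr1 C X A) \<phi>))"
      using Re_Meet[OF s G \<phi>1] Re_Pair_Pr1[OF id_hom[OF X] f \<phi>] Re_id[OF X \<phi>] by simp
    finally have "Le D X \<phi> (Re D ?s (Meet ?XA ?G (Re D (Pr1 C X A) \<phi>)))" .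
    moreover have "Le D X (Re D ?s (Meet ?XA ?G (Re D (Pr1 C X A) \<phi>))) (Re D f \<xi>)"
      using Re_mono[OF s M \<xi>2 le] Re_Pair_Pr2[OF id_hom[OF X] f \<xi>] by simp
    ultimately show "Le D X \<phi> (Re D f \<xi>)" by (rule Le_trans[OF X \<phi> Re_in[OF s M] f\<xi>])
  next
    assume le: "Le D X \<phi> (Re D f \<xi>)"
    have "Le D ?XA (Meet ?XA ?G (Re D (Pr1 C X A) \<phi>)) (Meet ?XA ?G (Re D (Pr1 C X A) (Re D f \<xi>)))"
      by (rule Meet_mono_right[OF XA G \<phi>1 f\<xi>1 Re_mono[OF Pr1_hom[OF X A] \<phi> f\<xi> le]])
    moreover have "Le D ?XA (Meet ?XA ?G (Re D (Pr1 C X A) (Re D f \<xi>))) (Re D (Pr2 C X A) \<xi>)"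
      using graph_subst[OF f \<xi>] Re_comp[OF Pr1_hom[OF X A] f \<xi>] by simp
    ultimately show "Le D ?XA (Meet ?XA ?G (Re D (Pr1 C X A) \<phi>)) (Re D (Pr2 C X A) \<xi>)"
      by (rule Le_trans[OF XA M Meet_in[OF XA G f\<xi>1] \<xi>2])
  qed
qed

end

section \<open>Existential quantification from AC\<close>

locale elementary_AC_doctrine = elementary_doctrine C D Meet Delta
  for C :: "('o,'m) cat" and D :: "('o,'m,'p) doct" and Meet Delta +
  fixes EpsC EpsW :: "'o \<Rightarrow> 'o \<Rightarrow> 'p \<Rightarrow> 'm"
  assumes AC: "AC C D EpsC EpsW"
begin

lemma EpsC_hom:
  "X \<in> Ob C \<Longrightarrow> \<not> stable_initial C X \<Longrightarrow> A \<in> Ob C \<Longrightarrow> \<psi> \<in> Pd D (Prd C A X) \<Longrightarrow>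
     EpsC A X \<psi> \<in> hom C A X"
  using AC unfolding AC_def by blast

lemma EpsW_hom:
  "X \<in> Ob C \<Longrightarrow> \<not> stable_initial C X \<Longrightarrow> A \<in> Ob C \<Longrightarrow> \<psi> \<in> Pd D (Prd C X A) \<Longrightarrow>
     EpsW A X \<psi> \<in> hom C A X"
  using AC unfolding AC_def by blast

text \<open>The left adjoint of \<open>\<pi>\<^sub>2\<^sup>*\<close> for the projection \<open>X \<times> A \<rightarrow> A\<close>, as provided by AC.\<close>

definition Ex_fst :: "'o \<Rightarrow> 'o \<Rightarrow> 'p \<Rightarrow> 'p" where
  "Ex_fst X A \<psi> = Re D (Pair C (EpsW A X \<psi>) (Idt C A)) \<psi>"

lemma Ex_fst_adjoint:
  "X \<in> Ob C \<Longrightarrow> \<not> stable_initial C X \<Longrightarrow> A \<in> Ob C \<Longrightarrow> \<psi> \<in> Pd D (Prd C X A) \<Longrightarrow> \<xi> \<in> Pd D A \<Longrightarrow>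
     Le D A (Ex_fst X A \<psi>) \<xi> \<longleftrightarrow> Le D (Prd C X A) \<psi> (Re D (Pr2 C X A) \<xi>)"
  using AC unfolding AC_def Ex_fst_def by blast

lemma Ex_fst_in:
  assumes "X \<in> Ob C" "\<not> stable_initial C X" "A \<in> Ob C" "\<psi> \<in> Pd D (Prd C X A)"
  shows "Ex_fst X A \<psi> \<in> Pd D A"
  unfolding Ex_fst_def by (rule Re_in[OF Pair_hom[OF EpsW_hom[OF assms] id_hom] assms(4)]) fact

lemma Le_Re_Pr2_Ex_fst:
  assumes X: "X \<in> Ob C" "\<not> stable_initial C X" and A: "A \<in> Ob C" and \<psi>: "\<psi> \<in> Pd D (Prd C X A)"
  shows "Le D (Prd C X A) \<psi> (Re D (Pr2 C X A) (Ex_fst X A \<psi>))"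
  using Ex_fst_adjoint[OF X A \<psi> Ex_fst_in[OF X A \<psi>]] Le_refl[OF A Ex_fst_in[OF X A \<psi>]] by blast

lemma Re_le_Ex_fst:
  assumes X: "X \<in> Ob C" "\<not> stable_initial C X" and A: "A \<in> Ob C" and \<psi>: "\<psi> \<in> Pd D (Prd C X A)"
    and w: "w \<in> hom C A (Prd C X A)" and w2: "Cmp C (Pr2 C X A) w = Idt C A"
  shows "Le D A (Re D w \<psi>) (Ex_fst X A \<psi>)"
proof -
  have "Re D w (Re D (Pr2 C X A) (Ex_fst X A \<psi>)) = Ex_fst X A \<psi>"
    using Re_comp[OF w Pr2_hom[OF X(1) A] Ex_fst_in[OF X A \<psi>]] Re_id[OF A Ex_fst_in[OF X A \<psi>]] w2
    by simp
  then show ?thesis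
    using Re_mono[OF w \<psi> Re_in[OF Pr2_hom[OF X(1) A] Ex_fst_in[OF X A \<psi>]]
        Le_Re_Pr2_Ex_fst[OF X A \<psi>]]
    by simp
qed

text \<open>A form of Frobenius reciprocity: AC computes \<open>\<exists>\<close> as a reindexing, which preserves meets.\<close>

lemma Meet_Ex_fst_le:
  assumes X: "X \<in> Ob C" "\<not> stable_initial C X" and A: "A \<in> Ob C" and \<psi>: "\<psi> \<in> Pd D (Prd C X A)"
    and \<chi>: "\<chi> \<in> Pd D A" and \<zeta>: "\<zeta> \<in> Pd D A"
    and le: "Le D (Prd C X A) (Meet (Prd C X A) \<psi> (Re D (Pr2 C X A) \<chi>)) (Re D (Pr2 C X A) \<zeta>)"
  shows "Le D A (Meet A \<chi> (Ex_fst X A \<psi>)) \<zeta>"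
proof -
  let ?e = "Pair C (EpsW A X \<psi>) (Idt C A)" and ?XA = "Prd C X A"
  have e: "?e \<in> hom C A ?XA" by (rule Pair_hom[OF EpsW_hom[OF X A \<psi>] id_hom[OF A]])
  have XA: "?XA \<in> Ob C" and \<chi>2: "Re D (Pr2 C X A) \<chi> \<in> Pd D ?XA"
    and \<zeta>2: "Re D (Pr2 C X A) \<zeta> \<in> Pd D ?XA"
    by (rule typing X A \<chi> \<zeta>)+
  have e_Pr2: "Re D ?e (Re D (Pr2 C X A) \<xi>) = \<xi>" if "\<xi> \<in> Pd D A" for \<xi>
    using Re_Pair_Pr2[OF EpsW_hom[OF X A \<psi>] id_hom[OF A] that] Re_id[OF A that] by simp
  have "Meet A \<chi> (Ex_fst X A \<psi>) = Re D ?e (Meet ?XA \<psi> (Re D (Pr2 C X A) \<chi>))"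
    unfolding Ex_fst_def using Re_Meet[OF e \<psi> \<chi>2] e_Pr2[OF \<chi>]
      Meet_commute[OF A Re_in[OF e \<psi>] \<chi>] by simp
  also have "Le D A \<dots> (Re D ?e (Re D (Pr2 C X A) \<zeta>))"
    by (rule Re_mono[OF e Meet_in[OF XA \<psi> \<chi>2] \<zeta>2 le])
  finally show ?thesis using e_Pr2[OF \<zeta>] by simp
qed

definition Image_of :: "'o \<Rightarrow> 'o \<Rightarrow> 'm \<Rightarrow> 'p" where
  "Image_of X A f = Ex_fst X A (graph C D Delta f)"

definition Sigma_graph :: "'o \<Rightarrow> 'o \<Rightarrow> 'm \<Rightarrow> 'p \<Rightarrow> 'p" where
  "Sigma_graph X A f \<phi> = Ex_fst X A (Meet (Prd C X A) (graph C D Delta f) (Re D (Pr1 C X A) \<phi>))"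

lemma Image_of_in:
  "f \<in> hom C X A \<Longrightarrow> \<not> stable_initial C X \<Longrightarrow> Image_of X A f \<in> Pd D A"
  unfolding Image_of_def by (rule Ex_fst_in[OF hom_dom_Ob _ hom_cod_Ob graph_in])

lemma Sigma_graph_left_adjoint:
  assumes f: "f \<in> hom C X A" and X: "\<not> stable_initial C X"
  shows "left_adjoint_reindex C D f X A (Sigma_graph X A f)"
  unfolding left_adjoint_reindex_def
proof (intro ballI conjI)
  have Xo: "X \<in> Ob C" and A: "A \<in> Ob C" using f hom_dom_Ob hom_cod_Ob by blast+
  fix \<phi> assume \<phi>: "\<phi> \<in> Pd D X"
  have M: "Meet (Prd C X A) (graph C D Delta f) (Re D (Pr1 C X A) \<phi>) \<in> Pd D (Prd C X A)"
    by (rule typing Xo A f \<phi>)+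
  show "Sigma_graph X A f \<phi> \<in> Pd D A" unfolding Sigma_graph_def by (rule Ex_fst_in[OF Xo X A M])
  fix \<xi> assume \<xi>: "\<xi> \<in> Pd D A"
  show "Le D A (Sigma_graph X A f \<phi>) \<xi> \<longleftrightarrow> Le D X \<phi> (Re D f \<xi>)"
    unfolding Sigma_graph_def Ex_fst_adjoint[OF Xo X A M \<xi>] by (rule graph_adjunction[OF f \<phi> \<xi>])
qed

lemma Sigma_graph_le_Image_of:
  assumes f: "f \<in> hom C X A" and X: "\<not> stable_initial C X" and \<phi>: "\<phi> \<in> Pd D X"
  shows "Le D A (Sigma_graph X A f \<phi>) (Image_of X A f)"
proof -
  have Xo: "X \<in> Ob C" and A: "A \<in> Ob C" using f hom_dom_Ob hom_cod_Ob by blast+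
  let ?XA = "Prd C X A" and ?G = "graph C D Delta f"
  have XA: "?XA \<in> Ob C" and G: "?G \<in> Pd D ?XA" and \<phi>1: "Re D (Pr1 C X A) \<phi> \<in> Pd D ?XA"
    and I2: "Re D (Pr2 C X A) (Image_of X A f) \<in> Pd D ?XA"
    by (rule typing Xo A f \<phi> Image_of_in[OF f X])+
  have "Le D ?XA (Meet ?XA ?G (Re D (Pr1 C X A) \<phi>)) (Re D (Pr2 C X A) (Image_of X A f))"
    using Le_trans[OF XA Meet_in[OF XA G \<phi>1] G I2 Meet_le1[OF XA G \<phi>1]]
      Le_Re_Pr2_Ex_fst[OF Xo X A G] unfolding Image_of_def by blast
  then show ?thesis
    unfolding Sigma_graph_def
    using Ex_fst_adjoint[OF Xo X A Meet_in[OF XA G \<phi>1] Image_of_in[OF f X]] by blast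
qed

lemma Meet_Image_of_le:
  assumes f: "f \<in> hom C X A" and X: "\<not> stable_initial C X"
    and \<chi>: "\<chi> \<in> Pd D A" and \<zeta>: "\<zeta> \<in> Pd D A" and le: "Le D X (Re D f \<chi>) (Re D f \<zeta>)"
  shows "Le D A (Meet A \<chi> (Image_of X A f)) \<zeta>"
  unfolding Image_of_def
proof (rule Meet_Ex_fst_le[OF _ X _ graph_in[OF f] \<chi> \<zeta>])
  show Xo: "X \<in> Ob C" and A: "A \<in> Ob C" using f hom_dom_Ob hom_cod_Ob by blast+
  let ?XA = "Prd C X A" and ?G = "graph C D Delta f"
  have XA: "?XA \<in> Ob C" and G: "?G \<in> Pd D ?XA"
    and \<chi>2: "Re D (Pr2 C X A) \<chi> \<in> Pd D ?XA" and \<zeta>2: "Re D (Pr2 C X A) \<zeta> \<in> Pd D ?XA"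
    and \<chi>1: "Re D (Pr1 C X A) (Re D f \<chi>) \<in> Pd D ?XA"
    and \<zeta>1: "Re D (Pr1 C X A) (Re D f \<zeta>) \<in> Pd D ?XA"
    by (rule typing Xo A f \<chi> \<zeta>)+
  have "Le D ?XA (Meet ?XA ?G (Re D (Pr2 C X A) \<chi>)) (Re D (Pr1 C X A) (Re D f \<chi>))"
    using graph_subst_sym[OF f \<chi>] Re_comp[OF Pr1_hom[OF Xo A] f \<chi>] by simp
  then have "Le D ?XA (Meet ?XA ?G (Re D (Pr2 C X A) \<chi>)) (Re D (Pr1 C X A) (Re D f \<zeta>))"
    using Le_trans[OF XA Meet_in[OF XA G \<chi>2] \<chi>1 \<zeta>1] Re_mono[OF Pr1_hom[OF Xo A] _ _ le] f \<chi> \<zeta>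
    by (blast intro: typing)
  then have "Le D ?XA (Meet ?XA ?G (Re D (Pr2 C X A) \<chi>))
      (Meet ?XA ?G (Re D (Pr1 C X A) (Re D f \<zeta>)))"
    by (rule Meet_greatest[OF XA G \<zeta>1 Meet_in[OF XA G \<chi>2] Meet_le1[OF XA G \<chi>2]])
  moreover have "Le D ?XA (Meet ?XA ?G (Re D (Pr1 C X A) (Re D f \<zeta>))) (Re D (Pr2 C X A) \<zeta>)"
    using graph_subst[OF f \<zeta>] Re_comp[OF Pr1_hom[OF Xo A] f \<zeta>] by simp
  ultimately show "Le D ?XA (Meet ?XA ?G (Re D (Pr2 C X A) \<chi>)) (Re D (Pr2 C X A) \<zeta>)"
    by (rule Le_trans[OF XA Meet_in[OF XA G \<chi>2] Meet_in[OF XA G \<zeta>1] \<zeta>2])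
qed

lemma Le_Image_of_section:
  assumes f: "f \<in> hom C X A" and X: "\<not> stable_initial C X"
    and s: "s \<in> hom C A X" and fs: "Cmp C f s = Idt C A" and \<psi>: "\<psi> \<in> Pd D A"
  shows "Le D A \<psi> (Image_of X A f)"
proof -
  have Xo: "X \<in> Ob C" and A: "A \<in> Ob C" using f hom_dom_Ob hom_cod_Ob by blast+
  let ?w = "Pair C s (Idt C A)"
  have w: "?w \<in> hom C A (Prd C X A)" by (rule typing s A)+
  have Gw: "Re D ?w (graph C D Delta f) \<in> Pd D A" by (rule typing w f)+
  have "Cmp C (Cmp C f (Pr1 C X A)) ?w = Cmp C (Pr2 C X A) ?w"
    using comp_assoc[OF w Pr1_hom[OF Xo A] f] Pr1_Pair[OF s id_hom[OF A]]
      Pr2_Pair[OF s id_hom[OF A]] fs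
    by simp
  then have "Le D A \<psi> (Re D ?w (graph C D Delta f))"
    unfolding graph_eq[OF f]
    by (rule Le_Re_Pair_Delta[OF comp_hom[OF Pr1_hom[OF Xo A] f] Pr2_hom[OF Xo A] w _ \<psi>])
  moreover have "Le D A (Re D ?w (graph C D Delta f)) (Image_of X A f)"
    unfolding Image_of_def
    by (rule Re_le_Ex_fst[OF Xo X A graph_in[OF f] w Pr2_Pair[OF s id_hom[OF A]]])
  ultimately show ?thesis by (rule Le_trans[OF A \<psi> Gw Image_of_in[OF f X]])
qed

end

section \<open>Objects mapping to a stable initial object\<close>

context fp_doctrine
begin

lemma stable_initial_Ob: "stable_initial C Z \<Longrightarrow> Z \<in> Ob C"
  and stable_initial_hom_unique: "stable_initial C Z \<Longrightarrow> u \<in> hom C Z A \<Longrightarrow> v \<in> hom C Z A \<Longrightarrow> u = v"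
  and stable_initial_hom_exists: "stable_initial C Z \<Longrightarrow> A \<in> Ob C \<Longrightarrow> \<exists>u. u \<in> hom C Z A"
  unfolding stable_initial_def initial_def using hom_cod_Ob by blast+

definition maps_to_stable_initial :: "'o \<Rightarrow> bool" where
  "maps_to_stable_initial Y \<longleftrightarrow> (\<exists>Z y. stable_initial C Z \<and> y \<in> hom C Y Z)"

lemma stable_initial_maps_to_stable_initial: "stable_initial C Z \<Longrightarrow> maps_to_stable_initial Z"
  unfolding maps_to_stable_initial_def using id_hom stable_initial_Ob by blast

lemma maps_to_stable_initial_precomp:
  "maps_to_stable_initial Y \<Longrightarrow> g \<in> hom C Y' Y \<Longrightarrow> maps_to_stable_initial Y'"
  unfolding maps_to_stable_initial_def using comp_hom by blast

lemma maps_to_stable_initial_hom_exists: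
  "maps_to_stable_initial Y \<Longrightarrow> W \<in> Ob C \<Longrightarrow> \<exists>u. u \<in> hom C Y W"
  unfolding maps_to_stable_initial_def using stable_initial_hom_exists comp_hom by meson

text \<open>If \<open>y : Y \<rightarrow> Z\<close> with \<open>Z\<close> stably initial, then \<open>Y \<times> Z \<cong> Z\<close> is initial, and \<open>Y\<close> is a retract
  of \<open>Y \<times> Z\<close> via \<open>\<langle>id, y\<rangle>\<close>; so \<open>Y\<close> is initial as well.\<close>

lemma maps_to_stable_initial_hom_unique:
  assumes Y: "maps_to_stable_initial Y" and u: "u \<in> hom C Y W" and v: "v \<in> hom C Y W"
  shows "u = v"
proof -
  obtain Z y where Z: "stable_initial C Z" and y: "y \<in> hom C Y Z"
    using Y unfolding maps_to_stable_initial_def by blast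
  have Yo: "Y \<in> Ob C" and Zo: "Z \<in> Ob C" using y hom_dom_Ob hom_cod_Ob by blast+
  obtain i where i: "i \<in> hom C (Prd C Y Z) Z" and "iso C i"
    using Z Yo unfolding stable_initial_def by blast
  then obtain j where j: "j \<in> hom C Z (Prd C Y Z)" and ji: "Cmp C j i = Idt C (Prd C Y Z)"
    unfolding iso_def hom_def by auto
  have factors_through_Z: "t = Cmp C (Cmp C t j) i" if t: "t \<in> hom C (Prd C Y Z) W" for t
    using comp_assoc[OF i j t] ji comp_id[OF t] by simp
  have "Cmp C u (Pr1 C Y Z) = Cmp C v (Pr1 C Y Z)"
    using factors_through_Z[OF comp_hom[OF Pr1_hom[OF Yo Zo] u]]
      factors_through_Z[OF comp_hom[OF Pr1_hom[OF Yo Zo] v]]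
      stable_initial_hom_unique[OF Z comp_hom[OF j comp_hom[OF Pr1_hom[OF Yo Zo] u]]
        comp_hom[OF j comp_hom[OF Pr1_hom[OF Yo Zo] v]]]
    by simp
  moreover have "Cmp C (Cmp C t (Pr1 C Y Z)) (Pair C (Idt C Y) y) = t" if t: "t \<in> hom C Y W" for t
    using comp_assoc[OF Pair_hom[OF id_hom[OF Yo] y] Pr1_hom[OF Yo Zo] t]
      Pr1_Pair[OF id_hom[OF Yo] y] comp_id[OF t]
    by simp
  ultimately show ?thesis using u v by metis
qed

end

locale full_cocomprehension_doctrine = fp_doctrine C D
  for C :: "('o,'m) cat" and D :: "('o,'m,'p) doct" +
  fixes Bot :: "'o \<Rightarrow> 'p" and CoObj :: "'o \<Rightarrow> 'p \<Rightarrow> 'o" and CoArr :: "'o \<Rightarrow> 'p \<Rightarrow> 'm"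
  assumes full_cocomprehension: "full_cocomprehension C D Bot CoObj CoArr"
begin

lemma Bot_in: "A \<in> Ob C \<Longrightarrow> Bot A \<in> Pd D A"
  and Bot_le: "A \<in> Ob C \<Longrightarrow> a \<in> Pd D A \<Longrightarrow> Le D A (Bot A) a"
  and CoObj_Ob: "A \<in> Ob C \<Longrightarrow> a \<in> Pd D A \<Longrightarrow> CoObj A a \<in> Ob C"
  and CoArr_hom: "A \<in> Ob C \<Longrightarrow> a \<in> Pd D A \<Longrightarrow> CoArr A a \<in> hom C (CoObj A a) A"
  and Re_CoArr: "A \<in> Ob C \<Longrightarrow> a \<in> Pd D A \<Longrightarrow> Re D (CoArr A a) a = Bot (CoObj A a)"
  and CoArr_universal: "A \<in> Ob C \<Longrightarrow> a \<in> Pd D A \<Longrightarrow> f \<in> hom C Y A \<Longrightarrow> Re D f a = Bot Y \<Longrightarrow>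
        \<exists>g. g \<in> hom C Y (CoObj A a) \<and> Cmp C (CoArr A a) g = f"
  and Le_of_CoArr_factor: "A \<in> Ob C \<Longrightarrow> a \<in> Pd D A \<Longrightarrow> b \<in> Pd D A \<Longrightarrow>
        g \<in> hom C (CoObj A b) (CoObj A a) \<Longrightarrow> Cmp C (CoArr A a) g = CoArr A b \<Longrightarrow> Le D A a b"
  using full_cocomprehension unfolding full_cocomprehension_def cocomprehension_def by blast+

declare Bot_in [typing] CoObj_Ob [typing] CoArr_hom [typing]

lemma Le_of_maps_to_stable_initial_CoObj:
  assumes A: "A \<in> Ob C" and a: "a \<in> Pd D A" and b: "b \<in> Pd D A"
    and Y: "maps_to_stable_initial (CoObj A b)"
  shows "Le D A a b"
proof -
  obtain g where g: "g \<in> hom C (CoObj A b) (CoObj A a)"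
    using maps_to_stable_initial_hom_exists[OF Y CoObj_Ob[OF A a]] by blast
  have "Cmp C (CoArr A a) g = CoArr A b"
    by (rule maps_to_stable_initial_hom_unique[OF Y]) (rule typing g A a b)+
  then show ?thesis by (rule Le_of_CoArr_factor[OF A a b g])
qed

lemma maps_to_stable_initial_Le:
  assumes Y: "maps_to_stable_initial Y" and a: "a \<in> Pd D Y" and b: "b \<in> Pd D Y"
  shows "Le D Y a b"
proof -
  have Yo: "Y \<in> Ob C" using Y unfolding maps_to_stable_initial_def using hom_dom_Ob by blast
  show ?thesis
    by (rule Le_of_maps_to_stable_initial_CoObj[OF Yo a b maps_to_stable_initial_precomp[OF Y]])
      (rule CoArr_hom[OF Yo b])
qed

lemma maps_to_stable_initial_Pd_eq:
  "maps_to_stable_initial Y \<Longrightarrow> a \<in> Pd D Y \<Longrightarrow> b \<in> Pd D Y \<Longrightarrow> a = b"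
  using maps_to_stable_initial_Le Le_antisym maps_to_stable_initial_def hom_dom_Ob by metis

end

section \<open>Co-comprehension arrows in an eaco\<close>

locale eaco_doctrine =
  fixes C :: "('o,'m) cat" and D :: "('o,'m,'p) doct" and Meet Delta EpsC EpsW Bot CoObj CoArr
  assumes eaco: "eaco C D Meet Delta EpsC EpsW Bot CoObj CoArr"

sublocale eaco_doctrine \<subseteq> elementary_AC_doctrine C D Meet Delta EpsC EpsW
  using eaco unfolding eaco_def by unfold_locales blast+

sublocale eaco_doctrine \<subseteq> full_cocomprehension_doctrine C D Bot CoObj CoArr
  using eaco unfolding eaco_def by unfold_locales blast

context eaco_doctrine
begin

lemma Re_Image_of_CoArr:
  assumes f: "f \<in> hom C X A" and a: "a \<in> Pd D A"
    and "\<not> stable_initial C (CoObj A a)" and "\<not> stable_initial C (CoObj X (Re D f a))"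
  shows "Re D f (Image_of (CoObj A a) A (CoArr A a))
    = Image_of (CoObj X (Re D f a)) X (CoArr X (Re D f a))"
  using eaco assms unfolding eaco_def Image_of_def Ex_fst_def Let_def by blast

text \<open>\<open>\<lceil>\<bottom>\<rceil>\<close> has a section, so its image is the top element; by the eaco condition its reindexing
  along \<open>h\<close> is the image of \<open>\<lceil>h\<^sup>*\<bottom>\<rceil>\<close>, which meets \<open>h\<^sup>*\<bottom>\<close> in \<open>\<bottom>\<close>.\<close>

lemma Re_Bot_of_not_stable_initial:
  assumes h: "h \<in> hom C E B" and E: "\<not> stable_initial C (CoObj E (Re D h (Bot B)))"
  shows "Re D h (Bot B) = Bot E"
proof -
  have Eo: "E \<in> Ob C" and B: "B \<in> Ob C" using h hom_dom_Ob hom_cod_Ob by blast+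
  let ?\<beta> = "Re D h (Bot B)" and ?cB = "CoArr B (Bot B)" and ?OB = "CoObj B (Bot B)"
  let ?c = "CoArr E ?\<beta>" and ?O = "CoObj E ?\<beta>"
  have \<beta>: "?\<beta> \<in> Pd D E" by (rule Re_in[OF h Bot_in[OF B]])
  have cB: "?cB \<in> hom C ?OB B" and c: "?c \<in> hom C ?O E" by (rule CoArr_hom Bot_in B Eo \<beta>)+
  obtain s where s: "s \<in> hom C B ?OB" and cB_s: "Cmp C ?cB s = Idt C B"
    using CoArr_universal[OF B Bot_in[OF B] id_hom[OF B] Re_id[OF B Bot_in[OF B]]] by blast
  show ?thesis
  proof (cases "stable_initial C ?OB")
    case True
    then have "maps_to_stable_initial E"
      by (blast intro: maps_to_stable_initial_precomp stable_initial_maps_to_stable_initial s h)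
    then show ?thesis using maps_to_stable_initial_Pd_eq \<beta> Bot_in[OF Eo] by blast
  next
    case OB: False
    have I: "Image_of ?O E ?c \<in> Pd D E" by (rule Image_of_in[OF c E])
    have "Le D B (Top B) (Image_of ?OB B ?cB)"
      by (rule Le_Image_of_section[OF cB OB s cB_s Top_in[OF B]])
    then have "Le D E (Re D h (Top B)) (Image_of ?O E ?c)"
      using Re_mono[OF h Top_in[OF B] Image_of_in[OF cB OB]]
        Re_Image_of_CoArr[OF h Bot_in[OF B] OB E]
      by simp
    then have "Le D E ?\<beta> (Image_of ?O E ?c)"
      by (rule Le_trans[OF Eo \<beta> Re_in[OF h Top_in[OF B]] I Le_Re_Top[OF h \<beta>]])
    then have "Le D E ?\<beta> (Meet E ?\<beta> (Image_of ?O E ?c))"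
      by (rule Meet_greatest[OF Eo \<beta> I \<beta> Le_refl[OF Eo \<beta>]])
    moreover have "Le D E (Meet E ?\<beta> (Image_of ?O E ?c)) (Bot E)"
      by (rule Meet_Image_of_le[OF c E \<beta> Bot_in[OF Eo]])
        (use Re_CoArr[OF Eo \<beta>] Bot_le CoObj_Ob[OF Eo \<beta>] Re_in[OF c Bot_in[OF Eo]] in simp)
    ultimately have "Le D E ?\<beta> (Bot E)" by (rule Le_trans[OF Eo \<beta> Meet_in[OF Eo \<beta> I] Bot_in[OF Eo]])
    then show ?thesis using Le_antisym[OF Eo \<beta> Bot_in[OF Eo]] Bot_le[OF Eo \<beta>] by blast
  qed
qed

lemma Re_Pr1_Bot:
  assumes B: "B \<in> Ob C" and E: "E \<in> Ob C"
  shows "Re D (Pr1 C B E) (Bot B) = Bot (Prd C B E)"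
proof (cases "stable_initial C (CoObj (Prd C B E) (Re D (Pr1 C B E) (Bot B)))")
  case False
  then show ?thesis by (rule Re_Bot_of_not_stable_initial[OF Pr1_hom[OF B E]])
next
  case O: True
  let ?BE = "Prd C B E" and ?\<beta> = "Re D (Pr1 C B E) (Bot B)"
  have BE: "?BE \<in> Ob C" and \<beta>: "?\<beta> \<in> Pd D ?BE" by (rule typing B E)+
  have "maps_to_stable_initial ?BE"
  proof (cases "stable_initial C E")
    case True
    then show ?thesis
      by (blast intro: maps_to_stable_initial_precomp stable_initial_maps_to_stable_initial
          Pr2_hom B E)
  next
    case False
    let ?s = "Pair C (Idt C B) (EpsC B E (Bot ?BE))"
    have s: "?s \<in> hom C B ?BE" by (rule typing B EpsC_hom[OF E False B Bot_in[OF BE]])+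
    have "Re D ?s ?\<beta> = Bot B"
      using Re_Pair_Pr1[OF id_hom[OF B] EpsC_hom[OF E False B Bot_in[OF BE]] Bot_in[OF B]]
        Re_id[OF B Bot_in[OF B]] by simp
    then obtain g where "g \<in> hom C B (CoObj ?BE ?\<beta>)" using CoArr_universal[OF BE \<beta> s] by blast
    then show ?thesis
      by (blast intro: maps_to_stable_initial_precomp stable_initial_maps_to_stable_initial O
          Pr1_hom B E)
  qed
  then show ?thesis using maps_to_stable_initial_Pd_eq \<beta> Bot_in[OF BE] by blast
qed

lemma Re_Bot:
  assumes h: "h \<in> hom C E B"
  shows "Re D h (Bot B) = Bot E"
proof -
  have Eo: "E \<in> Ob C" and B: "B \<in> Ob C" using h hom_dom_Ob hom_cod_Ob by blast+
  let ?w = "Pair C h (Idt C E)"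
  have w: "?w \<in> hom C E (Prd C B E)" by (rule typing h Eo)+
  have "Re D h (Bot B) = Re D ?w (Bot (Prd C B E))"
    using Re_Pair_Pr1[OF h id_hom[OF Eo] Bot_in[OF B]] Re_Pr1_Bot[OF B Eo] by simp
  also have "Le D E \<dots> (Re D ?w (Re D (Pr2 C B E) (Bot E)))"
    by (rule Re_mono[OF w]) (rule typing Bot_le B Eo)+
  also have "Re D ?w (Re D (Pr2 C B E) (Bot E)) = Bot E"
    using Re_Pair_Pr2[OF h id_hom[OF Eo] Bot_in[OF Eo]] Re_id[OF Eo Bot_in[OF Eo]] by simp
  finally show ?thesis
    using Le_antisym[OF Eo Re_in[OF h Bot_in[OF B]] Bot_in[OF Eo]]
      Bot_le[OF Eo Re_in[OF h Bot_in[OF B]]]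
    by blast
qed

lemma CoArr_Sigma_of_stable_initial:
  assumes B: "B \<in> Ob C" and a: "a \<in> Pd D B" and O: "stable_initial C (CoObj B a)"
  shows "left_adjoint_reindex C D (CoArr B a) (CoObj B a) B (\<lambda>_. Bot B)"
    and "Beck_Chevalley C D (CoArr B a) (CoObj B a) B (\<lambda>_. Bot B)"
proof -
  have f: "CoArr B a \<in> hom C (CoObj B a) B" by (rule CoArr_hom[OF B a])
  note O' = stable_initial_maps_to_stable_initial[OF O]
  show "left_adjoint_reindex C D (CoArr B a) (CoObj B a) B (\<lambda>_. Bot B)"
    unfolding left_adjoint_reindex_def
    using Bot_in[OF B] Bot_le[OF B] maps_to_stable_initial_Le[OF O'] Re_in[OF f] by blast
  show "Beck_Chevalley C D (CoArr B a) (CoObj B a) B (\<lambda>_. Bot B)"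
    unfolding Beck_Chevalley_def
  proof (intro allI impI ballI)
    fix h g k E F \<xi> \<zeta>
    assume h: "h \<in> hom C E B" and g: "g \<in> hom C F E" and k: "k \<in> hom C F (CoObj B a)"
      and \<xi>: "\<xi> \<in> Pd D B" and \<zeta>: "\<zeta> \<in> Pd D E"
    show "Le D E (Re D h (Bot B)) \<zeta> \<longleftrightarrow> Le D F (Re D k (Re D (CoArr B a) \<xi>)) (Re D g \<zeta>)"
      using Re_Bot[OF h] Bot_le[OF hom_dom_Ob[OF h] \<zeta>]
        maps_to_stable_initial_Le[OF maps_to_stable_initial_precomp[OF O' k]]
        Re_in[OF k Re_in[OF f \<xi>]] Re_in[OF g \<zeta>]
      by simp
  qed
qed

lemma Re_Meet_Image_of_CoArr_le:
  assumes B: "B \<in> Ob C" and a: "a \<in> Pd D B" and O: "\<not> stable_initial C (CoObj B a)"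
    and h: "h \<in> hom C E B" and \<xi>: "\<xi> \<in> Pd D B" and \<zeta>: "\<zeta> \<in> Pd D E"
    and le: "Le D (CoObj E (Re D h a))
               (Re D (CoArr E (Re D h a)) (Re D h \<xi>)) (Re D (CoArr E (Re D h a)) \<zeta>)"
  shows "Le D E (Re D h (Meet B \<xi> (Image_of (CoObj B a) B (CoArr B a)))) \<zeta>"
proof -
  let ?f = "CoArr B a" and ?O = "CoObj B a" and ?a' = "Re D h a"
  let ?c = "CoArr E ?a'" and ?O' = "CoObj E ?a'" and ?I = "Image_of ?O B ?f"
  have Eo: "E \<in> Ob C" using h hom_dom_Ob by blast
  have f: "?f \<in> hom C ?O B" and a': "?a' \<in> Pd D E" and I: "?I \<in> Pd D B"
    by (rule CoArr_hom[OF B a] Re_in[OF h a] Image_of_in[OF CoArr_hom[OF B a] O])+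
  have c: "?c \<in> hom C ?O' E" by (rule CoArr_hom[OF Eo a'])
  have \<xi>I: "Meet B \<xi> ?I \<in> Pd D B" and h\<xi>I: "Re D h (Meet B \<xi> ?I) \<in> Pd D E"
    and hI: "Re D h ?I \<in> Pd D E" and h\<xi>: "Re D h \<xi> \<in> Pd D E"
    by (rule typing B \<xi> I h)+
  show ?thesis
  proof (cases "stable_initial C ?O'")
    case True
    have "Le D E (Re D h (Meet B \<xi> ?I)) (Meet E ?a' (Re D h ?I))"
      using Le_of_maps_to_stable_initial_CoObj[OF Eo h\<xi>I a'
          stable_initial_maps_to_stable_initial[OF True]]
        Re_mono[OF h \<xi>I I Meet_le2[OF B \<xi> I]]
      by (rule Meet_greatest[OF Eo a' hI h\<xi>I])
    moreover have "Meet E ?a' (Re D h ?I) = Re D h (Meet B a ?I)" using Re_Meet[OF h a I] by simp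
    moreover have "Le D E (Re D h (Meet B a ?I)) (Bot E)"
    proof -
      have "Le D B (Meet B a ?I) (Bot B)"
        by (rule Meet_Image_of_le[OF f O a Bot_in[OF B]])
          (use Re_CoArr[OF B a] Bot_le CoObj_Ob[OF B a] Re_in[OF f Bot_in[OF B]] in simp)
      then show ?thesis using Re_mono[OF h Meet_in[OF B a I] Bot_in[OF B]] Re_Bot[OF h] by simp
    qed
    ultimately show ?thesis
      using Le_trans[OF Eo h\<xi>I _ Bot_in[OF Eo] _ _]
        Le_trans[OF Eo h\<xi>I Bot_in[OF Eo] \<zeta> _ Bot_le[OF Eo \<zeta>]]
        Re_in[OF h Meet_in[OF B a I]] by metis
  next
    case O': False
    have "Re D h (Meet B \<xi> ?I) = Meet E (Re D h \<xi>) (Image_of ?O' E ?c)"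
      using Re_Meet[OF h \<xi> I] Re_Image_of_CoArr[OF h a O O'] by simp
    also have "Le D E \<dots> \<zeta>" by (rule Meet_Image_of_le[OF c O' h\<xi> \<zeta> le])
    finally show ?thesis .
  qed
qed

lemma CoArr_Re_le_of_pullback:
  assumes B: "B \<in> Ob C" and a: "a \<in> Pd D B"
    and h: "h \<in> hom C E B" and g: "g \<in> hom C F E" and k: "k \<in> hom C F (CoObj B a)"
    and pb: "pullback C h g (CoArr B a) k" and \<xi>: "\<xi> \<in> Pd D B" and \<zeta>: "\<zeta> \<in> Pd D E"
    and le: "Le D F (Re D k (Re D (CoArr B a) \<xi>)) (Re D g \<zeta>)"
  shows "Le D (CoObj E (Re D h a))
           (Re D (CoArr E (Re D h a)) (Re D h \<xi>)) (Re D (CoArr E (Re D h a)) \<zeta>)"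
proof -
  let ?f = "CoArr B a" and ?a' = "Re D h a"
  let ?c = "CoArr E ?a'"
  have Eo: "E \<in> Ob C" using h hom_dom_Ob by blast
  have f: "?f \<in> hom C (CoObj B a) B" and a': "?a' \<in> Pd D E" and f\<xi>: "Re D ?f \<xi> \<in> Pd D (CoObj B a)"
    by (rule CoArr_hom[OF B a] Re_in[OF h a] Re_in[OF CoArr_hom[OF B a] \<xi>])+
  have c: "?c \<in> hom C (CoObj E ?a') E" by (rule CoArr_hom[OF Eo a'])
  have "Re D (Cmp C h ?c) a = Bot (CoObj E ?a')" using Re_comp[OF c h a] Re_CoArr[OF Eo a'] by simp
  then obtain v where v: "v \<in> hom C (CoObj E ?a') (CoObj B a)" and fv: "Cmp C ?f v = Cmp C h ?c"
    using CoArr_universal[OF B a comp_hom[OF c h]] by blast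
  obtain w where w: "w \<in> hom C (CoObj E ?a') F" and gw: "Cmp C g w = ?c" and kw: "Cmp C k w = v"
    using pullbackE(2)[OF pb h g k f c v fv[symmetric]] by blast
  have "Re D ?c (Re D h \<xi>) = Re D w (Re D k (Re D ?f \<xi>))"
    using Re_comp[OF c h \<xi>] Re_comp[OF comp_hom[OF w k] f \<xi>] Re_comp[OF w k f\<xi>] fv kw by simp
  moreover have "Re D ?c \<zeta> = Re D w (Re D g \<zeta>)" using Re_comp[OF w g \<zeta>] gw by simp
  ultimately show ?thesis
    using Re_mono[OF w Re_in[OF k f\<xi>] Re_in[OF g \<zeta>] le] by simp
qed

lemma CoArr_Beck_Chevalley:
  assumes B: "B \<in> Ob C" and a: "a \<in> Pd D B" and O: "\<not> stable_initial C (CoObj B a)"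
  shows "Beck_Chevalley C D (CoArr B a) (CoObj B a) B (Sigma_graph (CoObj B a) B (CoArr B a))"
  unfolding Beck_Chevalley_def
proof (intro allI impI ballI iffI)
  let ?f = "CoArr B a" and ?O = "CoObj B a"
  let ?S = "Sigma_graph ?O B ?f"
  have f: "?f \<in> hom C ?O B" by (rule CoArr_hom[OF B a])
  note adjoint = Sigma_graph_left_adjoint[OF f O]
  fix h g k E F \<xi> \<zeta>
  assume h: "h \<in> hom C E B" and g: "g \<in> hom C F E" and k: "k \<in> hom C F ?O"
    and pb: "pullback C h g ?f k" and \<xi>: "\<xi> \<in> Pd D B" and \<zeta>: "\<zeta> \<in> Pd D E"
  have f\<xi>: "Re D ?f \<xi> \<in> Pd D ?O" by (rule Re_in[OF f \<xi>])
  show "Le D F (Re D k (Re D ?f \<xi>)) (Re D g \<zeta>)" if "Le D E (Re D h (?S (Re D ?f \<xi>))) \<zeta>"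
    by (rule left_adjoint_square_le[OF adjoint f h g k pullbackE(1)[OF pb h g k f] f\<xi> \<zeta> that])
  assume "Le D F (Re D k (Re D ?f \<xi>)) (Re D g \<zeta>)"
  then have "Le D (CoObj E (Re D h a))
      (Re D (CoArr E (Re D h a)) (Re D h \<xi>)) (Re D (CoArr E (Re D h a)) \<zeta>)"
    by (rule CoArr_Re_le_of_pullback[OF B a h g k pb \<xi> \<zeta>])
  then have le_\<zeta>: "Le D E (Re D h (Meet B \<xi> (Image_of ?O B ?f))) \<zeta>"
    by (rule Re_Meet_Image_of_CoArr_le[OF B a O h \<xi> \<zeta>])
  have Eo: "E \<in> Ob C" using h hom_dom_Ob by blast
  have S: "?S (Re D ?f \<xi>) \<in> Pd D B" and I: "Image_of ?O B ?f \<in> Pd D B"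
    using adjoint f\<xi> Image_of_in[OF f O] unfolding left_adjoint_reindex_def by blast+
  have "Le D B (?S (Re D ?f \<xi>)) \<xi>"
    using adjoint f\<xi> \<xi> Le_refl[OF hom_dom_Ob[OF f] f\<xi>] unfolding left_adjoint_reindex_def by blast
  then have "Le D B (?S (Re D ?f \<xi>)) (Meet B \<xi> (Image_of ?O B ?f))"
    by (rule Meet_greatest[OF B \<xi> I S _ Sigma_graph_le_Image_of[OF f O f\<xi>]])
  then have "Le D E (Re D h (?S (Re D ?f \<xi>))) (Re D h (Meet B \<xi> (Image_of ?O B ?f)))"
    by (rule Re_mono[OF h S Meet_in[OF B \<xi> I]])
  then show "Le D E (Re D h (?S (Re D ?f \<xi>))) \<zeta>"
    by (rule Le_trans[OF Eo Re_in[OF h S] Re_in[OF h Meet_in[OF B \<xi> I]] \<zeta> _ le_\<zeta>])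
qed

lemma CoArr_has_Sigma:
  assumes B: "B \<in> Ob C" and a: "a \<in> Pd D B"
  shows "\<exists>S. left_adjoint_reindex C D (CoArr B a) (CoObj B a) B S \<and>
             Beck_Chevalley C D (CoArr B a) (CoObj B a) B S"
proof (cases "stable_initial C (CoObj B a)")
  case True
  then show ?thesis using CoArr_Sigma_of_stable_initial[OF B a] by blast
next
  case False
  then show ?thesis
    using Sigma_graph_left_adjoint[OF CoArr_hom[OF B a]] CoArr_Beck_Chevalley[OF B a] by blast
qed

end

theorem mainTheorem12:
  fixes C :: "('o,'m) cat" and D :: "('o,'m,'p) doct"
  assumes "eaco C D Meet Delta EpsC EpsW Bot CoObj CoArr"
  shows "restricted_Sigma_doctrine C D (coco_class C D CoArr)"
proof -
  interpret eaco_doctrine C D Meet Delta EpsC EpsW Bot CoObj CoArr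
    by (rule eaco_doctrine.intro[OF assms])
  show ?thesis
    unfolding restricted_Sigma_doctrine_iff
  proof (intro conjI doctrine ballI allI impI)
    fix f A B assume "f \<in> coco_class C D CoArr" and f: "f \<in> hom C A B"
    then obtain B' a where B': "B' \<in> Ob C" and a: "a \<in> Pd D B'" and "f = CoArr B' a"
      unfolding coco_class_def by blast
    moreover have "A = CoObj B' a" and "B = B'"
      using f CoArr_hom[OF B' a] \<open>f = CoArr B' a\<close> unfolding hom_def by auto
    ultimately show "\<exists>S. left_adjoint_reindex C D f A B S \<and> Beck_Chevalley C D f A B S"
      using CoArr_has_Sigma by blast
  qed
qed

end
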